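(* Assume $(H_S(BS))$. Let $(N^S_t(i))_{t\ge0,i\in\mathbb{Z}}$ be i.i.d. $SR(\mu_S)$-processes and $0\le t_0<t_1<t_0+1$. For $t>0,i\in\mathbb{Z}$ put $\zeta_{t_0,t}(i)=\min(N^S_{T_S(t_0+t)}(i)-N^S_{T_St_0}(i),1)$ and $\zeta_{t_1,t}(i)=\min(N^S_{T_S(t_1+t)}(i)-N^S_{T_St_1}(i),1)$, and $\Theta_{t_0,t_1}=\inf\{t>0:\ \forall i\in C(\zeta_{t_0,t_1-t_0},0),\ \zeta_{t_1,t}(i)=1\}$. Then $\Theta_{t_0,t_1}\in[0,1]$ and its law is $\theta_{t_1-t_0}$.
   Context: $(H_S(BS))$: $\mu_S$ is a probability measure on $(0,\infty)$ with bounded support and mean $m_S$; $T_S=\max\operatorname{supp}\mu_S$; $\nu_S(dt)=m_S^{-1}\mu_S((t,\infty))dt$, whose support is $[0,T_S]$. A $SR(\mu)$-process: $N_t=\#\{k\ge1:T_k\le t\}$ with $T_1\sim\nu_\mu(dt)=m_\mu^{-1}\mu((t,\infty))dt$, $T_{k+1}=T_k+X_k$, $(X_k)$ i.i.d. with law $\mu$ independent of $T_1$. For $\eta\in\{0,1\}^{\mathbb{Z}}$, $C(\eta,i)$ is $\emptyset$ if $\eta(i)=0$ and otherwise the maximal set of consecutive integers containing $i$ on which $\eta\equiv1$. For $t,s\ge0$, $g_S(t,s)=\Pr[N^S_{T_St}>0,\ N^S_{T_S(t+s)}>N^S_{T_St}]$ for a $SR(\mu_S)$-process $N^S$. For $u\in(0,1)$,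 $\theta_u$ is the probability measure on $[0,1]$ with $\theta_u([0,h])=\nu_S((T_Su,T_S))+\big(\nu_S((T_Su,T_S))/(1-g_S(u,h))\big)^2g_S(u,h)$ for $h\in[0,1]$. *)

theory Defs
  imports "HOL-Probability.Probability"
begin

definition SR_mean :: "real measure \<Rightarrow> real" where
  "SR_mean \<mu> = (\<integral>x. x \<partial>\<mu>)"

definition SR_supp :: "real measure \<Rightarrow> real set" where
  "SR_supp \<mu> = {x. \<forall>e>0. 0 < emeasure \<mu> {x - e <..< x + e}}"

definition SR_T :: "real measure \<Rightarrow> real" where
  "SR_T \<mu> = Sup (SR_supp \<mu>)"

text \<open>Stationary first-arrival law nu(dt) = m^{-1} mu((t,oo)) dt on (0,oo).\<close>
definition SR_nu :: "real measure \<Rightarrow> real measure" where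
  "SR_nu \<mu> = density lborel
     (\<lambda>t. ennreal (indicator {0<..} t * measure \<mu> {t<..} / SR_mean \<mu>))"

text \<open>Counting process of a renewal sequence: y None = T_1, y (Some k) = X_{k+1};
  the arrival times are T_{k+1} = y None + sum_{j<k} y (Some j).\<close>
definition SR_count :: "(nat option \<Rightarrow> real) \<Rightarrow> real \<Rightarrow> nat" where
  "SR_count y t = card {k::nat. y None + (\<Sum>j<k. y (Some j)) \<le> t}"

definition SR_space :: "real measure \<Rightarrow> (nat option \<Rightarrow> real) measure" where
  "SR_space \<mu> = (\<Pi>\<^sub>M j\<in>UNIV. (case j of None \<Rightarrow> SR_nu \<mu> | Some _ \<Rightarrow> \<mu>))"

definition SR_g :: "real measure \<Rightarrow> real \<Rightarrow> real \<Rightarrow> real" where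
  "SR_g \<mu> t s = measure (SR_space \<mu>)
     {y \<in> space (SR_space \<mu>). 0 < SR_count y (SR_T \<mu> * t)
                              \<and> SR_count y (SR_T \<mu> * t) < SR_count y (SR_T \<mu> * (t + s))}"

definition theta_cdf :: "real measure \<Rightarrow> real \<Rightarrow> real \<Rightarrow> real" where
  "theta_cdf \<mu> u h =
     (let a = measure (SR_nu \<mu>) {SR_T \<mu> * u <..< SR_T \<mu>}; g = SR_g \<mu> u h
      in a + (a / (1 - g))\<^sup>2 * g)"

definition consec_comp :: "(int \<Rightarrow> nat) \<Rightarrow> int \<Rightarrow> int set" where
  "consec_comp \<eta> i = (if \<eta> i = 0 then {}
     else {j. \<forall>k. min i j \<le> k \<and> k \<le> max i j \<longrightarrow> \<eta> k = 1})"

definition SR_N :: "real measure \<Rightarrow> (int \<Rightarrow> nat option \<Rightarrow> 'a \<Rightarrow> real) \<Rightarrow> int \<Rightarrow> real \<Rightarrow> 'a \<Rightarrow> nat" where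
  "SR_N \<mu> Y i t \<omega> = SR_count (\<lambda>j. Y i j \<omega>) (SR_T \<mu> * t)"

definition SR_zeta :: "real measure \<Rightarrow> (int \<Rightarrow> nat option \<Rightarrow> 'a \<Rightarrow> real) \<Rightarrow> real \<Rightarrow> real \<Rightarrow> int \<Rightarrow> 'a \<Rightarrow> nat" where
  "SR_zeta \<mu> Y s t i \<omega> = min (SR_N \<mu> Y i (s + t) \<omega> - SR_N \<mu> Y i s \<omega>) 1"

definition SR_Theta :: "real measure \<Rightarrow> (int \<Rightarrow> nat option \<Rightarrow> 'a \<Rightarrow> real) \<Rightarrow> real \<Rightarrow> real \<Rightarrow> 'a \<Rightarrow> real" where
  "SR_Theta \<mu> Y t0 t1 \<omega> = Inf {t::real. 0 < t \<and>
     (\<forall>i \<in> consec_comp (\<lambda>i. SR_zeta \<mu> Y t0 (t1 - t0) i \<omega>) 0. SR_zeta \<mu> Y t1 t i \<omega> = 1)}"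

end

theory Submission
  imports Defs
begin

text \<open>
  For almost every outcome every site's renewal sequence is regular (positive
  interarrival times bounded by \<open>T_S\<close>, diverging arrivals), and then the \<open>\<zeta>\<close> variables are
  renewal indicators: \<open>\<Theta> \<le> h\<close> iff every site of the cluster \<open>C\<close> of 0 (the maximal run of
  sites renewing in \<open>(T_S t\<^sub>0, T_S t\<^sub>1]\<close>) renews again in \<open>(T_S t\<^sub>1, T_S (t\<^sub>1 + h)]\<close>.
  Because interarrival times are at most \<open>T_S\<close> and \<open>t\<^sub>1 - t\<^sub>0 < 1\<close>, this holds for \<open>h = 1\<close>,
  so \<open>\<Theta> \<in> [0,1]\<close>. Stationarity (via Campbell's formula, renewal density \<open>1/m_S\<close>) shows that
  a window of length \<open>x\<close> has no renewal with probability \<open>\<nu>_S((x,\<infinity>))\<close>; hence a site misses the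
  first window with probability \<open>\<alpha> = \<nu>_S((T_S u, T_S))\<close> and renews in both with probability
  \<open>g_S(u,h)\<close>. Splitting \<open>\<Theta> \<le> h\<close> according to \<open>C = [-l, r]\<close> and using independence of the
  sites gives \<open>P(\<Theta> \<le> h) = \<alpha> + \<Sum>\<^sub>l\<^sub>,\<^sub>r \<alpha>\<^sup>2 g\<^sup>l\<^sup>+\<^sup>r\<^sup>+\<^sup>1 = \<alpha> + (\<alpha>/(1-g))\<^sup>2 g\<close>.
\<close>

section \<open>Independence: general facts\<close>

lemma (in prob_space) indep_vars_reindex:
  assumes indep: "indep_vars M' X I" and f: "inj_on f J" "f ` J \<subseteq> I"
  shows "indep_vars (\<lambda>j. M' (f j)) (\<lambda>j. X (f j)) J"
  unfolding indep_vars_def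
proof (intro conjI ballI indep_setsI)
  let ?F = "\<lambda>i. sigma_sets (space M) {X i -` A \<inter> space M |A. A \<in> sets (M' i)}"
  have rv: "\<forall>i\<in>I. random_variable (M' i) (X i)" and ind: "indep_sets ?F I"
    using indep unfolding indep_vars_def by auto
  show "random_variable (M' (f j)) (X (f j))" if "j \<in> J" for j using rv f that by auto
  show "?F (f j) \<subseteq> events" if "j \<in> J" for j
    using ind f that unfolding indep_sets_def by auto
  fix A K assume K: "K \<noteq> {}" "K \<subseteq> J" "finite K" and A: "\<forall>j\<in>K. A j \<in> ?F (f j)"
  have injK: "inj_on f K" using f K by (blast intro: inj_on_subset)
  define B where "B i = A (the_inv_into K f i)" for i
  have B: "B (f j) = A j" if "j \<in> K" for j
    unfolding B_def using the_inv_into_f_f[OF injK that] by simp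
  have "prob (\<Inter>i\<in>f ` K. B i) = (\<Prod>i\<in>f ` K. prob (B i))"
    using K A f B by (intro indep_setsD[OF ind]) auto
  then show "prob (\<Inter>j\<in>K. A j) = (\<Prod>j\<in>K. prob (A j))"
    using B injK by (simp add: prod.reindex)
qed

lemma (in prob_space) indep_pair_nn_integral:
  assumes ind: "indep_var borel A borel B" and h[measurable]: "h \<in> borel_measurable (borel \<Otimes>\<^sub>M borel)"
  shows "(\<integral>\<^sup>+\<omega>. h (A \<omega>, B \<omega>) \<partial>M) = (\<integral>\<^sup>+b. \<integral>\<^sup>+a. h (a, b) \<partial>(distr M borel A) \<partial>(distr M borel B))"
proof -
  have rvA[measurable]: "random_variable borel A" and rvB[measurable]: "random_variable borel B"
   and eq: "distr M borel A \<Otimes>\<^sub>M distr M borel B = distr M (borel \<Otimes>\<^sub>M borel) (\<lambda>x. (A x, B x))"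
    using ind unfolding indep_var_distribution_eq by auto
  interpret DA: prob_space "distr M borel A" by (intro prob_space_distr rvA)
  interpret DB: prob_space "distr M borel B" by (intro prob_space_distr rvB)
  interpret DAB: pair_sigma_finite "distr M borel A" "distr M borel B" ..
  have "sets (distr M borel A \<Otimes>\<^sub>M distr M borel B) = sets (borel \<Otimes>\<^sub>M borel)"
    by (intro sets_pair_measure_cong) simp_all
  then have hm: "h \<in> borel_measurable (distr M borel A \<Otimes>\<^sub>M distr M borel B)"
    using measurable_cong_sets h by blast
  have "(\<integral>\<^sup>+\<omega>. h (A \<omega>, B \<omega>) \<partial>M) = integral\<^sup>N (distr M (borel \<Otimes>\<^sub>M borel) (\<lambda>x. (A x, B x))) h"
    by (subst nn_integral_distr) auto
  then show ?thesis
    using eq DB.nn_integral_fst[OF hm] DAB.Fubini'[of "\<lambda>a b. h (a, b)"] hm by simp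
qed

text \<open>If infinitely many independent random variables each fall into a set \<open>B\<close> with
  probability at most \<open>q < 1\<close>, then almost surely not all of them fall into \<open>B\<close>:
  the probability is bounded by \<open>q ^ n\<close> for every \<open>n\<close>.\<close>
lemma (in prob_space) indep_vars_all_in_null:
  fixes f :: "nat \<Rightarrow> 'i"
  assumes indep: "indep_vars M' X I" and f: "inj f" "range f \<subseteq> I"
    and B: "\<And>i. i \<in> I \<Longrightarrow> B \<in> sets (M' i)"
    and q: "\<And>i. i \<in> I \<Longrightarrow> prob (X i -` B \<inter> space M) \<le> q" and q1: "q < 1"
  shows "prob {\<omega> \<in> space M. \<forall>k. X (f k) \<omega> \<in> B} = 0"
proof -
  let ?E = "{\<omega> \<in> space M. \<forall>k. X (f k) \<omega> \<in> B}"
  have q0: "0 \<le> q" using q[of "f 0"] f measure_nonneg[of M] by (meson order_trans rangeI subsetD)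
  have le: "prob ?E \<le> q ^ n" for n
  proof (cases "n = 0")
    case False
    let ?J = "f ` {..<n}"
    have sub: "?J \<subseteq> I" using f by auto
    have ev: "X i -` B \<inter> space M \<in> events" if "i \<in> I" for i
      using indep B that unfolding indep_vars_def by (auto intro: measurable_sets)
    have "?E \<subseteq> (\<Inter>i\<in>?J. X i -` B \<inter> space M)" by auto
    moreover have "(\<Inter>i\<in>?J. X i -` B \<inter> space M) \<in> events"
      using False sub ev by (intro sets.finite_INT) auto
    ultimately have "prob ?E \<le> prob (\<Inter>i\<in>?J. X i -` B \<inter> space M)"
      by (rule finite_measure_mono)
    also have "\<dots> = (\<Prod>i\<in>?J. prob (X i -` B \<inter> space M))"
      using False sub B by (intro indep_varsD[OF indep]) auto
    also have "\<dots> \<le> (\<Prod>i\<in>?J. q)"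
      using sub q by (intro prod_mono) auto
    also have "\<dots> = q ^ n" using f by (simp add: card_image inj_on_subset)
    finally show ?thesis .
  qed simp
  have "(\<lambda>n. q ^ n) \<longlonglongrightarrow> 0" using q0 q1 by (intro LIMSEQ_power_zero) simp
  then have "prob ?E \<le> 0" using le by (intro LIMSEQ_le_const) auto
  then show ?thesis using measure_nonneg[of M ?E] by linarith
qed

section \<open>The interarrival law under the bounded-support hypothesis\<close>

text \<open>Hypothesis \<open>(H_S(BS))\<close>: \<open>\<mu>\<close> is a probability law on \<open>(0,\<infinity>)\<close> with bounded support.\<close>
locale interarrival_law =
  fixes \<mu> :: "real measure"
  assumes mu_prob: "prob_space \<mu>" and mu_sets: "sets \<mu> = sets borel"
    and mu_pos: "emeasure \<mu> {..0} = 0" and mu_bdd: "\<exists>B. emeasure \<mu> {B<..} = 0"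
begin

sublocale MU: prob_space \<mu> by (rule mu_prob)

abbreviation "TS \<equiv> SR_T \<mu>"
abbreviation "nuS \<equiv> SR_nu \<mu>"
abbreviation "mS \<equiv> SR_mean \<mu>"

lemma mu_meas[simp]: "A \<in> sets borel \<Longrightarrow> A \<in> sets \<mu>"
  using mu_sets by simp

lemma space_mu: "space \<mu> = UNIV"
  using sets_eq_imp_space_eq[OF mu_sets] by simp

lemma mu_measurable: "f \<in> borel_measurable borel \<Longrightarrow> f \<in> borel_measurable \<mu>"
  by (subst measurable_cong_sets[OF mu_sets refl]) simp

text \<open>A compact set disjoint from the support is \<open>\<mu>\<close>-null (finite subcover by null intervals).\<close>
lemma compact_null:
  assumes K: "compact K" and dis: "K \<inter> SR_supp \<mu> = {}"
  shows "emeasure \<mu> K = 0"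
proof -
  have "\<forall>x\<in>K. \<exists>e>0. emeasure \<mu> {x - e <..< x + e} = 0"
  proof
    fix x assume "x \<in> K"
    then have "x \<notin> SR_supp \<mu>" using dis by auto
    then show "\<exists>e>0. emeasure \<mu> {x - e <..< x + e} = 0"
      unfolding SR_supp_def by (auto simp: not_less)
  qed
  then obtain e where e: "\<And>x. x\<in>K \<Longrightarrow> e x > 0 \<and> emeasure \<mu> {x - e x <..< x + e x} = 0"
    by metis
  have cov: "K \<subseteq> (\<Union>x\<in>K. {x - e x <..< x + e x})" using e by force
  obtain C where C: "C \<subseteq> K" "finite C" "K \<subseteq> (\<Union>x\<in>C. {x - e x <..< x + e x})"
    using compactE_image[OF K _ cov] by (metis open_greaterThanLessThan)
  have "emeasure \<mu> K \<le> emeasure \<mu> (\<Union>x\<in>C. {x - e x <..< x + e x})"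
    by (intro emeasure_mono C) (auto intro!: sets.finite_UN C)
  also have "\<dots> \<le> (\<Sum>x\<in>C. emeasure \<mu> {x - e x <..< x + e x})"
    by (intro emeasure_subadditive_finite C) auto
  also have "\<dots> = 0" using C e by (auto intro!: sum.neutral)
  finally show ?thesis by simp
qed

lemma supp_le: "emeasure \<mu> {B<..} = 0 \<Longrightarrow> x \<in> SR_supp \<mu> \<Longrightarrow> x \<le> B"
proof (rule ccontr)
  assume B: "emeasure \<mu> {B<..} = 0" and x: "x \<in> SR_supp \<mu>" and "\<not> x \<le> B"
  then have "0 < x - B" by simp
  then have "0 < emeasure \<mu> {x - (x - B) <..< x + (x - B)}"
    using x unfolding SR_supp_def by blast
  also have "\<dots> \<le> emeasure \<mu> {B<..}" by (intro emeasure_mono) auto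
  finally show False using B by simp
qed

lemma mass_split:
  assumes "UNIV \<subseteq> {..0} \<union> A \<union> B" "A \<in> sets borel" "B \<in> sets borel"
  shows "1 \<le> emeasure \<mu> {..0} + emeasure \<mu> A + emeasure \<mu> B"
proof -
  have "1 = emeasure \<mu> UNIV" using MU.emeasure_space_1 space_mu by simp
  also have "\<dots> \<le> emeasure \<mu> ({..0} \<union> A \<union> B)"
    using assms by (intro emeasure_mono) auto
  also have "\<dots> \<le> emeasure \<mu> ({..0} \<union> A) + emeasure \<mu> B"
    using assms by (intro emeasure_subadditive) auto
  also have "\<dots> \<le> emeasure \<mu> {..0} + emeasure \<mu> A + emeasure \<mu> B"
    using assms by (intro add_right_mono emeasure_subadditive) auto
  finally show ?thesis .
qed

lemma supp_ne: "SR_supp \<mu> \<noteq> {}"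
proof
  assume e: "SR_supp \<mu> = {}"
  obtain B where B: "emeasure \<mu> {B<..} = 0" using mu_bdd by auto
  have "emeasure \<mu> {0..B} = 0" using e by (intro compact_null) auto
  moreover have "1 \<le> emeasure \<mu> {..0} + emeasure \<mu> {0..B} + emeasure \<mu> {B<..}"
    by (rule mass_split) auto
  ultimately show False using mu_pos B by simp
qed

lemma supp_bdd: "bdd_above (SR_supp \<mu>)"
  using mu_bdd supp_le by (auto simp: bdd_above_def)

text \<open>\<open>\<mu>\<close> puts no mass above \<open>T_S = max supp \<mu>\<close>: the set \<open>(T_S,\<infinity>)\<close> is covered by the
  null set \<open>(B,\<infinity>)\<close> and countably many compact intervals missing the support.\<close>
lemma T_null: "emeasure \<mu> {TS<..} = 0"
proof -
  obtain B where B: "emeasure \<mu> {B<..} = 0" using mu_bdd by auto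
  have sub: "{TS<..} \<subseteq> (\<Union>n. {TS + 1/Suc n..B}) \<union> {B<..}"
  proof
    fix x assume "x \<in> {TS<..}"
    then have x: "x > TS" by simp
    obtain n where "1 / real (Suc n) < x - TS" using reals_Archimedean[of "x - TS"] x
      by (auto simp: inverse_eq_divide)
    then have "TS + 1 / real (Suc n) \<le> x" by linarith
    then show "x \<in> (\<Union>n. {TS + 1/Suc n..B}) \<union> {B<..}"
      by (cases "x \<le> B") auto
  qed
  have n: "{TS + 1/Suc n..B} \<in> null_sets \<mu>" for n
  proof -
    have "x \<notin> SR_supp \<mu>" if x: "x \<in> {TS + 1/Suc n..B}" for x
    proof
      assume "x \<in> SR_supp \<mu>"
      then have "x \<le> TS" unfolding SR_T_def using supp_bdd by (intro cSup_upper)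
      moreover have "0 < 1 / (1 + real n)" by (simp add: add_pos_nonneg)
      moreover have "TS + 1 / (1 + real n) \<le> x" using x by simp
      ultimately show False by linarith
    qed
    then have "{TS + 1/Suc n..B} \<inter> SR_supp \<mu> = {}" by blast
    then show ?thesis using compact_null[of "{TS + 1/Suc n..B}"] by (auto simp: null_sets_def)
  qed
  have "(\<Union>n. {TS + 1/Suc n..B}) \<union> {B<..} \<in> null_sets \<mu>"
    using n B by (intro null_sets.Un null_sets_UN') (auto simp: null_sets_def)
  then show ?thesis using sub by (meson null_sets_subset measurable_sets_borel mu_meas
        borel_open open_greaterThan null_setsD1)
qed

lemma T_pos: "0 < TS"
proof (rule ccontr)
  assume "\<not> 0 < TS"
  then have "emeasure \<mu> {0<..} \<le> emeasure \<mu> {TS<..}" by (intro emeasure_mono) auto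
  then have "emeasure \<mu> {0<..} = 0" using T_null by simp
  moreover have "1 \<le> emeasure \<mu> {..0} + emeasure \<mu> {0<..} + emeasure \<mu> {}"
    by (rule mass_split) auto
  ultimately show False using mu_pos by simp
qed

lemma below_T: "t < TS \<Longrightarrow> 0 < emeasure \<mu> {t<..}"
proof -
  assume "t < TS"
  then obtain x where x: "x \<in> SR_supp \<mu>" "t < x"
    unfolding SR_T_def using less_cSup_iff[OF supp_ne supp_bdd] by auto
  then have "0 < x - t" by simp
  then have "0 < emeasure \<mu> {x - (x - t) <..< x + (x - t)}" using x unfolding SR_supp_def by blast
  also have "\<dots> \<le> emeasure \<mu> {t<..}" by (intro emeasure_mono) auto
  finally show ?thesis .
qed

lemma AE_mu: "AE x in \<mu>. 0 < x \<and> x \<le> TS"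
proof -
  have "{x \<in> space \<mu>. \<not> (0 < x \<and> x \<le> TS)} \<subseteq> {..0} \<union> {TS<..}" by auto
  moreover have "{..0} \<union> {TS<..} \<in> null_sets \<mu>"
    using mu_pos T_null by (intro null_sets.Un) (auto intro!: null_setsI)
  ultimately show ?thesis by (rule AE_I'[rotated])
qed

definition tail :: "real \<Rightarrow> real" where "tail t = measure \<mu> {t<..}"

lemma tail_emeasure: "emeasure \<mu> {t<..} = ennreal (tail t)"
  unfolding tail_def by (simp add: MU.emeasure_eq_measure)

lemma tail_nonneg: "0 \<le> tail t" unfolding tail_def by simp

lemma tail_mono: "s \<le> t \<Longrightarrow> tail t \<le> tail s"
  unfolding tail_def by (intro MU.finite_measure_mono) auto

lemma tail_meas[measurable]: "tail \<in> borel_measurable borel"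
proof -
  have "mono (\<lambda>t. - tail t)" using tail_mono by (auto simp: mono_def)
  then have "(\<lambda>t. - (- tail t)) \<in> borel_measurable borel"
    by (intro borel_measurable_uminus borel_measurable_mono)
  then show ?thesis by simp
qed

lemma tail_compl: "measure \<mu> {..t} = 1 - tail t"
proof -
  have "{t<..} = space \<mu> - {..t}" using space_mu by auto
  then show ?thesis unfolding tail_def by (simp add: MU.prob_compl)
qed

lemma tail_zero: "TS \<le> t \<Longrightarrow> tail t = 0"
proof -
  assume "TS \<le> t"
  then have "emeasure \<mu> {t<..} \<le> emeasure \<mu> {TS<..}" by (intro emeasure_mono) auto
  then show ?thesis using T_null tail_emeasure tail_nonneg[of t] by simp
qed

lemma tail_pos: "t < TS \<Longrightarrow> 0 < tail t"
  using below_T tail_emeasure by simp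

text \<open>The mean \<open>m_S\<close> is positive: \<open>m_S \<ge> (T_S/2) \<mu>((T_S/2,\<infinity>)) > 0\<close>.\<close>
lemma mS_pos: "0 < mS"
proof -
  have int: "integrable \<mu> (\<lambda>x. x)"
    by (rule MU.integrable_const_bound[where B=TS]) (use AE_mu in \<open>auto elim: AE_mp intro: mu_measurable\<close>)
  have "ennreal (TS/2) * ennreal (tail (TS/2)) = (\<integral>\<^sup>+x. ennreal (TS/2) * indicator {TS/2<..} x \<partial>\<mu>)"
    by (simp add: nn_integral_cmult_indicator tail_emeasure)
  also have "\<dots> \<le> \<integral>\<^sup>+x. ennreal x \<partial>\<mu>"
    by (intro nn_integral_mono) (auto split: split_indicator intro!: ennreal_leI)
  also have "\<dots> = ennreal mS"
    unfolding SR_mean_def using AE_mu int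
    by (intro nn_integral_eq_integral) (auto elim: AE_mp)
  also have "ennreal (TS/2) * ennreal (tail (TS/2)) = ennreal (TS/2 * tail (TS/2))"
    by (rule ennreal_mult'[symmetric]) (use T_pos in simp)
  finally have "ennreal (TS/2 * tail (TS/2)) \<le> ennreal mS" .
  moreover have "0 < TS/2 * tail (TS/2)" using T_pos tail_pos[of "TS/2"] by simp
  ultimately show ?thesis using ennreal_le_iff2 by force
qed

definition nu_density :: "real \<Rightarrow> ennreal" where
  "nu_density t = ennreal (indicator {0<..} t * measure \<mu> {t<..} / mS)"

lemma nu_density_alt: "nu_density t = ennreal (1/mS) * indicator {0<..} t * ennreal (tail t)"
  unfolding nu_density_def tail_def using mS_pos
  by (auto simp: indicator_def ennreal_mult'' divide_inverse mult.commute)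

lemma nu_density_meas[measurable]: "nu_density \<in> borel_measurable borel"
  unfolding nu_density_alt by measurable

lemma sets_nu[simp, measurable_cong]: "sets nuS = sets borel"
  unfolding SR_nu_def by simp

lemma emeasure_nu: "A \<in> sets borel \<Longrightarrow> emeasure nuS A = (\<integral>\<^sup>+t. nu_density t * indicator A t \<partial>lborel)"
  unfolding SR_nu_def nu_density_def[symmetric] by (intro emeasure_density) auto

lemma nn_integral_nu: "f \<in> borel_measurable borel \<Longrightarrow> (\<integral>\<^sup>+t. f t \<partial>nuS) = (\<integral>\<^sup>+t. nu_density t * f t \<partial>lborel)"
  unfolding SR_nu_def nu_density_def[symmetric] by (intro nn_integral_density) auto

lemma nu_tail_integral:
  "emeasure nuS {y<..} = ennreal (1/mS) * (\<integral>\<^sup>+t. indicator {0<..} t * ennreal (tail t) * indicator {y<..} t \<partial>lborel)"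
  by (subst emeasure_nu) (auto simp: nu_density_alt mult_ac nn_integral_cmult[symmetric])

lemma nu_above_T: "emeasure nuS {TS..} = 0"
proof -
  have "(\<integral>\<^sup>+t. nu_density t * indicator {TS..} t \<partial>lborel) = (\<integral>\<^sup>+t. 0 \<partial>(lborel::real measure))"
    by (intro nn_integral_cong) (auto simp: nu_density_alt tail_zero split: split_indicator)
  then show ?thesis by (simp add: emeasure_nu)
qed

lemma nu_nonpos: "emeasure nuS {..0} = 0"
proof -
  have "(\<integral>\<^sup>+t. nu_density t * indicator {..0} t \<partial>lborel) = (\<integral>\<^sup>+t. 0 \<partial>(lborel::real measure))"
    by (intro nn_integral_cong) (auto simp: nu_density_alt split: split_indicator)
  then show ?thesis by (simp add: emeasure_nu)
qed

text \<open>The support of \<open>\<nu>_S\<close> is all of \<open>[0,T_S]\<close>: every interval \<open>(c,T_S)\<close> has positive mass,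
  since the density is at least \<open>m_S\<^sup>-\<^sup>1 \<mu>((d,\<infinity>)) > 0\<close> on \<open>(c,d]\<close> with \<open>d\<close> the midpoint.\<close>
lemma nu_gap_pos:
  assumes c: "0 \<le> c" "c < TS"
  shows "0 < emeasure nuS {c<..<TS}"
proof -
  let ?d = "(c + TS) / 2"
  let ?lower = "ennreal (1/mS) * ennreal (tail ?d)"
  have "0 < ?lower * ennreal ((TS - c)/2)"
    using mS_pos tail_pos[of ?d] c by (simp add: ennreal_zero_less_mult_iff)
  also have "\<dots> = (\<integral>\<^sup>+t. ?lower * indicator {c<..?d} t \<partial>lborel)"
    using c by (simp add: nn_integral_cmult_indicator)
  also have "\<dots> \<le> (\<integral>\<^sup>+t. nu_density t * indicator {c<..<TS} t \<partial>lborel)"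
  proof (intro nn_integral_mono)
    fix t
    show "?lower * indicator {c<..?d} t \<le> nu_density t * indicator {c<..<TS} t"
    proof (cases "t \<in> {c<..?d}")
      case True
      then have "tail ?d \<le> tail t" by (intro tail_mono) auto
      then show ?thesis using True c by (auto simp: nu_density_alt intro!: mult_left_mono ennreal_leI)
    qed simp
  qed
  also have "\<dots> = emeasure nuS {c<..<TS}" by (simp add: emeasure_nu)
  finally show ?thesis .
qed

end

section \<open>Renewal sequences: deterministic facts\<close>

text \<open>A renewal sequence is encoded as \<open>y :: nat option \<Rightarrow> real\<close>: \<open>y None = T\<^sub>1\<close> is the first
  arrival and \<open>y (Some k) = X\<^sub>k\<close> the interarrival times. \<open>psum y k = X\<^sub>0 + \<dots> + X\<^sub>k\<^sub>-\<^sub>1\<close> and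
  \<open>arrival y k = T\<^sub>k\<^sub>+\<^sub>1\<close>; \<open>renews y a b\<close> says that some arrival lies in \<open>(a,b]\<close>.\<close>
definition psum :: "(nat option \<Rightarrow> real) \<Rightarrow> nat \<Rightarrow> real" where
  "psum y k = (\<Sum>j<k. y (Some j))"

definition arrival :: "(nat option \<Rightarrow> real) \<Rightarrow> nat \<Rightarrow> real" where
  "arrival y k = y None + psum y k"

definition renews :: "(nat option \<Rightarrow> real) \<Rightarrow> real \<Rightarrow> real \<Rightarrow> bool" where
  "renews y a b \<longleftrightarrow> (\<exists>k. a < arrival y k \<and> arrival y k \<le> b)"

text \<open>Regular sequences: positive first arrival, interarrival times in \<open>(0,B]\<close>, diverging
  arrival times. Almost every sample of an \<open>SR(\<mu>_S)\<close>-process is regular with \<open>B = T_S\<close>.\<close>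
definition regular :: "real \<Rightarrow> (nat option \<Rightarrow> real) \<Rightarrow> bool" where
  "regular B y \<longleftrightarrow> 0 < y None \<and> (\<forall>k. 0 < y (Some k) \<and> y (Some k) \<le> B) \<and> (\<forall>K. \<exists>n. K < psum y n)"

definition in_gap :: "(nat option \<Rightarrow> real) \<Rightarrow> nat \<Rightarrow> real \<Rightarrow> bool" where
  "in_gap y k w \<longleftrightarrow> psum y k < w \<and> w - psum y k < y (Some k)"

lemma psum_0[simp]: "psum y 0 = 0" by (simp add: psum_def)
lemma psum_Suc[simp]: "psum y (Suc k) = psum y k + y (Some k)" by (simp add: psum_def)
lemma arrival_Suc: "arrival y (Suc k) = arrival y k + y (Some k)" by (simp add: arrival_def)

lemma psum_mono: "regular B y \<Longrightarrow> k \<le> k' \<Longrightarrow> psum y k \<le> psum y k'"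
  unfolding psum_def regular_def by (intro sum_mono2) (auto intro: less_imp_le)

lemma arrival_mono: "regular B y \<Longrightarrow> k \<le> k' \<Longrightarrow> arrival y k \<le> arrival y k'"
  using psum_mono by (simp add: arrival_def)

lemma arrival_ge_first: "regular B y \<Longrightarrow> y None \<le> arrival y k"
  using psum_mono[of B y 0 k] by (simp add: arrival_def)

lemma arrival_unbounded: "regular B y \<Longrightarrow> \<exists>n. K < arrival y n"
proof -
  assume "regular B y"
  then obtain n where "K - y None < psum y n" by (auto simp: regular_def)
  then have "K < arrival y n" by (simp add: arrival_def)
  then show ?thesis by blast
qed

lemma sum_unbounded:
  fixes x :: "nat \<Rightarrow> real"
  assumes nn: "\<And>j. 0 \<le> x j" and inf: "\<And>N. \<exists>j\<ge>N. \<delta> < x j" and d: "0 < \<delta>"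
  shows "\<exists>n. K < (\<Sum>j<n. x j)"
proof -
  have "\<exists>n. real c * \<delta> \<le> (\<Sum>j<n. x j)" for c
  proof (induction c)
    case 0 then show ?case by (auto intro!: exI[of _ 0])
  next
    case (Suc c)
    then obtain n where n: "real c * \<delta> \<le> (\<Sum>j<n. x j)" by auto
    obtain j where j: "n \<le> j" "\<delta> < x j" using inf by auto
    have "(\<Sum>j<n. x j) \<le> (\<Sum>j<j. x j)" using j nn by (intro sum_mono2) auto
    then have "real (Suc c) * \<delta> \<le> (\<Sum>i<Suc j. x i)" using n j by (simp add: algebra_simps)
    then show ?case by blast
  qed
  moreover obtain c :: nat where "K < real c * \<delta>"
    using d reals_Archimedean3 by blast
  ultimately show ?thesis by (meson less_le_trans)
qed

lemma in_gap_unique: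
  assumes g: "regular B y" and w: "0 < w" "\<forall>n. psum y n \<noteq> w"
  shows "\<exists>!k. in_gap y k w"
proof -
  have gap_iff: "in_gap y k w \<longleftrightarrow> psum y k < w \<and> w < psum y (Suc k)" for k
    by (auto simp: in_gap_def)
  obtain n where n: "w < psum y n" using g by (auto simp: regular_def)
  define n0 where "n0 = (LEAST n. w < psum y n)"
  have n0: "w < psum y n0" unfolding n0_def using n by (rule LeastI)
  obtain k0 where k0: "n0 = Suc k0" using n0 w(1) by (cases n0) auto
  have "k0 < n0" using k0 by simp
  then have "\<not> w < psum y k0" unfolding n0_def by (rule not_less_Least)
  moreover have "psum y k0 \<noteq> w" using w(2) by blast
  ultimately have "psum y k0 < w" by linarith
  then have ex: "in_gap y k0 w" using n0 k0 gap_iff by simp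
  show ?thesis
  proof (rule ex1I[of _ k0])
    fix k assume k: "in_gap y k w"
    show "k = k0"
    proof (rule ccontr)
      assume "k \<noteq> k0"
      then consider "Suc k \<le> k0" | "Suc k0 \<le> k" by linarith
      then show False
      proof cases
        case 1 then show False using psum_mono[OF g 1] k ex gap_iff by simp
      next
        case 2 then show False using psum_mono[OF g 2] k ex gap_iff by simp
      qed
    qed
  qed (rule ex)
qed

lemma gap_indicator_sum:
  assumes g: "regular B y" and w: "\<forall>n. psum y n \<noteq> w"
  shows "(\<Sum>k. if in_gap y k w then 1 else 0 :: ennreal) = indicator {0<..} w"
proof (cases "0 < w")
  case True
  from in_gap_unique[OF g True w] obtain k0 where "\<And>k. in_gap y k w \<longleftrightarrow> k = k0"
    by blast
  then have "(\<lambda>k. if in_gap y k w then 1 else 0 :: ennreal) = (\<lambda>k. if k = k0 then 1 else 0)"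
    by auto
  moreover have "(\<Sum>k. (if k = k0 then 1 else 0::ennreal)) = 1"
    using sums_single[of k0 "\<lambda>_. 1::ennreal"] by (simp add: sums_iff)
  ultimately show ?thesis using True by simp
next
  case False
  have "\<not> in_gap y k w" for k
    using False psum_mono[OF g, of 0 k] by (simp add: in_gap_def)
  then show ?thesis using False by simp
qed

lemma renews_mono: "b \<le> b' \<Longrightarrow> renews y a b \<Longrightarrow> renews y a b'"
  unfolding renews_def by (meson order_trans)

lemma renews_split:
  assumes "0 \<le> x" "0 \<le> z"
  shows "renews y s (s + (x + z)) \<longleftrightarrow> renews y s (s + x) \<or> renews y (s + x) (s + x + z)"
proof
  assume "renews y s (s + (x + z))"
  then obtain k where "s < arrival y k" "arrival y k \<le> s + (x + z)" unfolding renews_def by auto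
  then show "renews y s (s + x) \<or> renews y (s + x) (s + x + z)"
    unfolding renews_def by (cases "arrival y k \<le> s + x") (auto simp: add.assoc)
next
  assume "renews y s (s + x) \<or> renews y (s + x) (s + x + z)"
  then show "renews y s (s + (x + z))" using assms unfolding renews_def
    by (elim disjE exE) (auto intro!: exI simp: add.assoc)
qed

lemma no_renewal_iff:
  assumes g: "regular B y" and x: "0 \<le> x"
  shows "(\<not> renews y s (s + x)) \<longleftrightarrow> (s + x < y None \<or> (\<exists>k. arrival y k \<le> s \<and> s + x < arrival y (Suc k)))"
proof
  assume nr: "\<not> renews y s (s + x)"
  show "s + x < y None \<or> (\<exists>k. arrival y k \<le> s \<and> s + x < arrival y (Suc k))"
  proof (cases "s + x < y None")
    case False
    then have "arrival y 0 \<le> s + x" by (simp add: arrival_def)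
    then have "\<not> s < arrival y 0" using nr unfolding renews_def by blast
    obtain n where n: "s < arrival y n" using arrival_unbounded[OF g] by blast
    define n0 where "n0 = (LEAST n. s < arrival y n)"
    have n0: "s < arrival y n0" unfolding n0_def using n by (rule LeastI)
    obtain k where k: "n0 = Suc k" using n0 \<open>\<not> s < arrival y 0\<close> by (cases n0) auto
    have "k < n0" using k by simp
    then have "\<not> s < arrival y k" unfolding n0_def by (rule not_less_Least)
    moreover have "s + x < arrival y (Suc k)" using nr n0 k unfolding renews_def by (auto simp: not_le)
    ultimately show ?thesis by auto
  qed simp
next
  assume "s + x < y None \<or> (\<exists>k. arrival y k \<le> s \<and> s + x < arrival y (Suc k))"
  then have "arrival y j \<le> s \<or> s + x < arrival y j" for j
  proof (elim disjE exE conjE)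
    assume "s + x < y None"
    then show ?thesis using arrival_ge_first[OF g, of j] by linarith
  next
    fix k assume k: "arrival y k \<le> s" "s + x < arrival y (Suc k)"
    show ?thesis
    proof (cases "j \<le> k")
      case True then show ?thesis using arrival_mono[OF g True] k by linarith
    next
      case False then have "Suc k \<le> j" by simp
      then show ?thesis using arrival_mono[OF g, of "Suc k" j] k by linarith
    qed
  qed
  then show "\<not> renews y s (s + x)" unfolding renews_def using leD by blast
qed

definition next_index :: "(nat option \<Rightarrow> real) \<Rightarrow> real \<Rightarrow> nat" where
  "next_index y t = (LEAST n. t < arrival y n)"

lemma arrival_next_index:
  assumes g: "regular B y"
  shows "t < arrival y (next_index y t)"
proof -
  obtain n where "t < arrival y n" using arrival_unbounded[OF g] by blast
  then show ?thesis unfolding next_index_def by (rule LeastI)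
qed

lemma arrival_le_iff:
  assumes g: "regular B y"
  shows "arrival y k \<le> t \<longleftrightarrow> k < next_index y t"
proof
  assume "arrival y k \<le> t"
  then show "k < next_index y t"
    using arrival_next_index[OF g, of t] arrival_mono[OF g, of "next_index y t" k] by linarith
next
  assume "k < next_index y t"
  then have "\<not> t < arrival y k" unfolding next_index_def by (rule not_less_Least)
  then show "arrival y k \<le> t" by simp
qed

lemma SR_count_regular: "regular B y \<Longrightarrow> SR_count y t = next_index y t"
proof -
  assume g: "regular B y"
  have "SR_count y t = card {k. arrival y k \<le> t}" unfolding SR_count_def arrival_def psum_def ..
  also have "{k. arrival y k \<le> t} = {..<next_index y t}" using arrival_le_iff[OF g] by auto
  finally show ?thesis by simp
qed

lemma SR_count_less_iff:
  assumes g: "regular B y"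
  shows "SR_count y a < SR_count y b \<longleftrightarrow> renews y a b"
  unfolding SR_count_regular[OF g] renews_def
proof
  assume "next_index y a < next_index y b"
  then have "arrival y (next_index y a) \<le> b" using arrival_le_iff[OF g] by blast
  then show "\<exists>k. a < arrival y k \<and> arrival y k \<le> b"
    using arrival_next_index[OF g] by blast
next
  assume "\<exists>k. a < arrival y k \<and> arrival y k \<le> b"
  then obtain k where "a < arrival y k" "arrival y k \<le> b" by auto
  then have "k < next_index y b" and "\<not> k < next_index y a"
    using arrival_le_iff[OF g, of k a] arrival_le_iff[OF g, of k b] by auto
  then show "next_index y a < next_index y b" by simp
qed

lemma min_diff: "min ((n::nat) - m) 1 = (if m < n then 1 else 0)" by auto

lemma SR_count_zero:
  assumes g: "regular B y"
  shows "SR_count y 0 = 0"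
proof -
  have "0 < arrival y 0" using g by (simp add: regular_def arrival_def)
  then show ?thesis using arrival_le_iff[OF g, of 0 0] by (simp add: SR_count_regular[OF g])
qed

lemma renews_iff_next:
  assumes g: "regular B y"
  shows "renews y a b \<longleftrightarrow> arrival y (next_index y a) \<le> b"
proof
  assume "renews y a b"
  then obtain k where k: "a < arrival y k" "arrival y k \<le> b" unfolding renews_def by auto
  then have "\<not> k < next_index y a" using arrival_le_iff[OF g, of k a] by simp
  then have "arrival y (next_index y a) \<le> arrival y k" by (intro arrival_mono[OF g]) simp
  then show "arrival y (next_index y a) \<le> b" using k by simp
next
  assume "arrival y (next_index y a) \<le> b"
  then show "renews y a b" using arrival_next_index[OF g] unfolding renews_def by blast
qed

lemma renews_right_cont:
  assumes g: "regular B y" and H: "\<And>x. b < x \<Longrightarrow> renews y a x"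
  shows "renews y a b"
proof (rule ccontr)
  let ?r = "arrival y (next_index y a)"
  assume "\<not> renews y a b"
  then have "b < ?r" using renews_iff_next[OF g] by simp
  then have "renews y a ((b + ?r) / 2)" by (intro H) simp
  then have "?r \<le> (b + ?r) / 2" using renews_iff_next[OF g] by simp
  then show False using \<open>b < ?r\<close> by simp
qed

text \<open>Interarrival times are at most \<open>B\<close>: after a renewal in \<open>(a,b]\<close> the next one comes
  within \<open>(b,b+B]\<close>.\<close>
lemma renews_next_window:
  assumes g: "regular B y" and r: "renews y a b"
  shows "renews y b (b + B)"
proof -
  obtain k where k: "a < arrival y k" "arrival y k \<le> b" using r unfolding renews_def by auto
  then have "k < next_index y b" using arrival_le_iff[OF g] by simp
  then obtain k' where k': "next_index y b = Suc k'" by (cases "next_index y b") auto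
  have "arrival y k' \<le> b" using arrival_le_iff[OF g, of k' b] k' by simp
  moreover have "y (Some k') \<le> B" using g by (simp add: regular_def)
  ultimately have "arrival y (next_index y b) \<le> b + B" unfolding k' arrival_Suc by simp
  then show ?thesis using renews_iff_next[OF g] by simp
qed

lemma measurable_psum[measurable (raw)]:
  assumes [measurable]: "\<And>j. (\<lambda>\<omega>. V \<omega> j) \<in> borel_measurable N"
  shows "(\<lambda>\<omega>. psum (V \<omega>) k) \<in> borel_measurable N"
  unfolding psum_def by measurable

lemma measurable_arrival[measurable (raw)]:
  assumes [measurable]: "\<And>j. (\<lambda>\<omega>. V \<omega> j) \<in> borel_measurable N"
  shows "(\<lambda>\<omega>. arrival (V \<omega>) k) \<in> borel_measurable N"
  unfolding arrival_def by measurable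

lemma measurable_renews[measurable (raw)]:
  assumes [measurable]: "\<And>j. (\<lambda>\<omega>. V \<omega> j) \<in> borel_measurable N"
  shows "Measurable.pred N (\<lambda>\<omega>. renews (V \<omega>) a b)"
  unfolding renews_def by measurable

lemma measurable_in_gap[measurable (raw)]:
  assumes [measurable]: "\<And>j. (\<lambda>\<omega>. V \<omega> j) \<in> borel_measurable N" and [measurable]: "w \<in> borel_measurable N"
  shows "Measurable.pred N (\<lambda>\<omega>. in_gap (V \<omega>) k (w \<omega>))"
  unfolding in_gap_def by measurable

text \<open>Regularity only needs the divergence condition along integer bounds, which makes it
  a countable combination of measurable conditions.\<close>
lemma measurable_regular[measurable (raw)]:
  assumes [measurable]: "\<And>j. (\<lambda>\<omega>. V \<omega> j) \<in> borel_measurable N"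
  shows "Measurable.pred N (\<lambda>\<omega>. regular B (V \<omega>))"
proof -
  have "(\<forall>K. \<exists>n. K < psum y n) \<longleftrightarrow> (\<forall>K::nat. \<exists>n. real K < psum y n)" for y
    by (meson less_trans reals_Archimedean2)
  then have "(\<lambda>\<omega>. regular B (V \<omega>)) = (\<lambda>\<omega>. 0 < V \<omega> None \<and> (\<forall>k. 0 < V \<omega> (Some k) \<and> V \<omega> (Some k) \<le> B)
     \<and> (\<forall>K::nat. \<exists>n. real K < psum (V \<omega>) n))"
    unfolding regular_def by presburger
  then show ?thesis by simp
qed

lemma measurable_SR_count[measurable (raw)]:
  assumes [measurable]: "\<And>j. (\<lambda>\<omega>. V \<omega> j) \<in> borel_measurable N"
  shows "(\<lambda>\<omega>. SR_count (V \<omega>) t) \<in> measurable N (count_space UNIV)"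
  unfolding SR_count_def by (rule measurable_card) measurable

section \<open>A single stationary renewal process\<close>

locale renewal = interarrival_law \<mu> + prob_space M
  for \<mu> :: "real measure" and M :: "'a measure" +
  fixes V :: "'a \<Rightarrow> nat option \<Rightarrow> real"
  assumes indepV: "indep_vars (\<lambda>_. borel) (\<lambda>j \<omega>. V \<omega> j) UNIV"
    and law_first: "distr M borel (\<lambda>\<omega>. V \<omega> None) = nuS"
    and law_inter: "\<And>k. distr M borel (\<lambda>\<omega>. V \<omega> (Some k)) = \<mu>"
begin

lemma rvV[measurable]: "(\<lambda>\<omega>. V \<omega> j) \<in> borel_measurable M"
  using indepV unfolding indep_vars_def by auto

lemma prob_inter_atMost: "prob ((\<lambda>\<omega>. V \<omega> (Some k)) -` {..d} \<inter> space M) = measure \<mu> {..d}"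
proof -
  have "prob ((\<lambda>\<omega>. V \<omega> (Some k)) -` {..d} \<inter> space M) = measure (distr M borel (\<lambda>\<omega>. V \<omega> (Some k))) {..d}"
    by (subst measure_distr) auto
  then show ?thesis by (simp add: law_inter)
qed

text \<open>Almost surely infinitely many interarrival times exceed \<open>T_S/2\<close>, because each does so
  independently with probability \<open>\<mu>((T_S/2,\<infinity>)) > 0\<close>.\<close>
lemma AE_inter_large: "AE \<omega> in M. \<forall>N. \<exists>j\<ge>N. TS/2 < V \<omega> (Some j)"
proof -
  let ?d = "TS/2"
  have q1: "measure \<mu> {..?d} < 1" using tail_compl tail_pos[of ?d] T_pos by simp
  have indep_inter: "indep_vars (\<lambda>_. borel) (\<lambda>j \<omega>. V \<omega> j) (range Some)"
    using indepV by (rule indep_vars_subset) simp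
  have null: "prob {\<omega> \<in> space M. \<forall>k. V \<omega> (Some (N + k)) \<in> {..?d}} = 0" for N
    using q1 prob_inter_atMost
    by (intro indep_vars_all_in_null[OF indep_inter, where f="\<lambda>k. Some (N + k)"])
      (auto simp: inj_def)
  have "AE \<omega> in M. \<not> (\<forall>k. V \<omega> (Some (N + k)) \<le> ?d)" for N
    using null[of N] by (intro AE_I'[of "{\<omega> \<in> space M. \<forall>k. V \<omega> (Some (N + k)) \<in> {..?d}}"])
      (auto simp: null_sets_def emeasure_eq_measure)
  then have "AE \<omega> in M. \<forall>N. \<not> (\<forall>k. V \<omega> (Some (N + k)) \<le> ?d)" by (simp add: AE_all_countable)
  then show ?thesis by eventually_elim (metis le_add1 le_iff_add not_le)
qed

lemma AE_regular: "AE \<omega> in M. regular TS (V \<omega>)"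
proof -
  have "AE \<omega> in M. 0 < V \<omega> None"
  proof -
    have "AE t in nuS. 0 < t"
      using nu_nonpos by (intro AE_I'[of "{..0}"]) (auto intro!: null_setsI)
    then show ?thesis unfolding law_first[symmetric] by (rule AE_distrD[rotated]) simp
  qed
  moreover have "AE \<omega> in M. 0 < V \<omega> (Some k) \<and> V \<omega> (Some k) \<le> TS" for k
    using AE_mu unfolding law_inter[of k, symmetric] by (rule AE_distrD[rotated]) simp
  then have "AE \<omega> in M. \<forall>k. 0 < V \<omega> (Some k) \<and> V \<omega> (Some k) \<le> TS"
    by (simp add: AE_all_countable)
  ultimately show ?thesis using AE_inter_large
  proof eventually_elim
    case (elim \<omega>)
    have "\<exists>n. K < (\<Sum>j<n. V \<omega> (Some j))" for K
      using elim T_pos by (intro sum_unbounded[where \<delta>="TS/2"]) (auto intro: less_imp_le)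
    then show ?case using elim unfolding regular_def psum_def by auto
  qed
qed

lemma indep_sum:
  assumes "finite I" "i \<notin> I"
  shows "indep_var borel (\<lambda>\<omega>. V \<omega> i) borel (\<lambda>\<omega>. \<Sum>j\<in>I. V \<omega> j)"
  using indep_vars_sum[of I i "\<lambda>j \<omega>. V \<omega> j"] assms indep_vars_subset[OF indepV] by auto

lemma sum_Some: "(\<Sum>j\<in>Some ` {..<k}. V \<omega> j) = psum (V \<omega>) k"
  unfolding psum_def by (subst sum.reindex) (auto simp: inj_on_def)

lemma indep_first_psum: "indep_var borel (\<lambda>\<omega>. V \<omega> None) borel (\<lambda>\<omega>. psum (V \<omega>) k)"
  using indep_sum[of "Some ` {..<k}" None] by (simp add: sum_Some)

lemma indep_inter_psum: "indep_var borel (\<lambda>\<omega>. V \<omega> (Some k)) borel (\<lambda>\<omega>. psum (V \<omega>) k)"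
  using indep_sum[of "Some ` {..<k}" "Some k"] by (auto simp: sum_Some)

lemma indep_inter_arrival: "indep_var borel (\<lambda>\<omega>. V \<omega> (Some k)) borel (\<lambda>\<omega>. arrival (V \<omega>) k)"
proof -
  have "(\<Sum>j\<in>insert None (Some ` {..<k}). V \<omega> j) = arrival (V \<omega>) k" for \<omega>
    by (subst sum.insert) (auto simp: sum_Some arrival_def)
  then show ?thesis using indep_sum[of "insert None (Some ` {..<k})" "Some k"] by auto
qed

subsection \<open>Campbell's formula: the renewal density is \<open>1/m_S\<close>\<close>

text \<open>Given \<open>psum = r\<close>, the point \<open>w\<close> lies in the \<open>k\<close>-th gap iff the next interarrival time
  exceeds \<open>w - r\<close>, which has probability \<open>tail (w - r)\<close>.\<close>
lemma gap_probability:
  "(\<integral>\<^sup>+\<omega>. (if in_gap (V \<omega>) k w then 1 else 0) \<partial>M)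
   = (\<integral>\<^sup>+r. (if r < w then ennreal (tail (w - r)) else 0) \<partial>distr M borel (\<lambda>\<omega>. psum (V \<omega>) k))"
proof -
  let ?h = "\<lambda>(a, b). if b < w \<and> w - b < a then 1 else 0 :: ennreal"
  have "(\<integral>\<^sup>+\<omega>. (if in_gap (V \<omega>) k w then 1 else 0) \<partial>M) = (\<integral>\<^sup>+\<omega>. ?h (V \<omega> (Some k), psum (V \<omega>) k) \<partial>M)"
    by (simp add: in_gap_def)
  also have "\<dots> = (\<integral>\<^sup>+b. \<integral>\<^sup>+a. ?h (a, b) \<partial>\<mu> \<partial>distr M borel (\<lambda>\<omega>. psum (V \<omega>) k))"
    using indep_pair_nn_integral[OF indep_inter_psum, of ?h] by (simp add: law_inter)
  also have "\<dots> = (\<integral>\<^sup>+r. (if r < w then ennreal (tail (w - r)) else 0) \<partial>distr M borel (\<lambda>\<omega>. psum (V \<omega>) k))"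
  proof (intro nn_integral_cong)
    fix b
    have "(\<integral>\<^sup>+a. ?h (a, b) \<partial>\<mu>) = (\<integral>\<^sup>+a. (if b < w then indicator {w - b<..} a else 0) \<partial>\<mu>)"
      by (intro nn_integral_cong) (auto split: split_indicator)
    then show "(\<integral>\<^sup>+a. ?h (a, b) \<partial>\<mu>) = (if b < w then ennreal (tail (w - b)) else 0)"
      by (simp add: tail_emeasure)
  qed
  finally show ?thesis .
qed

text \<open>This uses
  the independence of \<open>T\<^sub>1 \<sim> \<nu>_S\<close> and \<open>psum k\<close>, a translation and Fubini.\<close>
lemma arrival_integral:
  fixes f :: "real \<Rightarrow> ennreal"
  assumes f[measurable]: "f \<in> borel_measurable borel"
  shows "(\<integral>\<^sup>+\<omega>. f (arrival (V \<omega>) k) \<partial>M)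
     = (\<integral>\<^sup>+w. ennreal (1/mS) * f w * (\<integral>\<^sup>+\<omega>. (if in_gap (V \<omega>) k w then 1 else 0) \<partial>M) \<partial>lborel)"
proof -
  define L where "L = distr M borel (\<lambda>\<omega>. psum (V \<omega>) k)"
  define G where "G r w = ennreal (1/mS) * f w * (if r < w then ennreal (tail (w - r)) else 0)" for r w :: real
  have Gm[measurable]: "case_prod G \<in> borel_measurable (borel \<Otimes>\<^sub>M borel)" unfolding G_def by measurable
  have sets_L[measurable_cong]: "sets L = sets borel" unfolding L_def by simp
  interpret L: prob_space L unfolding L_def by (intro prob_space_distr) simp
  have "(\<integral>\<^sup>+\<omega>. f (arrival (V \<omega>) k) \<partial>M) = (\<integral>\<^sup>+\<omega>. (\<lambda>(a, b). f (a + b)) (V \<omega> None, psum (V \<omega>) k) \<partial>M)"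
    by (simp add: arrival_def)
  also have "\<dots> = (\<integral>\<^sup>+r. \<integral>\<^sup>+a. f (a + r) \<partial>nuS \<partial>L)"
    unfolding L_def using indep_pair_nn_integral[OF indep_first_psum[of k], of "\<lambda>(a, b). f (a + b)"]
    by (simp add: law_first)
  also have "\<dots> = (\<integral>\<^sup>+r. \<integral>\<^sup>+w. G r w \<partial>lborel \<partial>L)"
  proof (intro nn_integral_cong)
    fix r
    have "(\<integral>\<^sup>+a. f (a + r) \<partial>nuS) = (\<integral>\<^sup>+t. nu_density t * f (t + r) \<partial>lborel)"
      by (rule nn_integral_nu) simp
    also have "\<dots> = (\<integral>\<^sup>+t. G r (t + r) \<partial>lborel)"
      by (intro nn_integral_cong) (auto simp: nu_density_alt G_def mult_ac split: split_indicator)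
    also have "\<dots> = (\<integral>\<^sup>+w. G r w \<partial>lborel)"
      using nn_integral_real_affine[of "G r" 1 r] by (simp add: add.commute)
    finally show "(\<integral>\<^sup>+a. f (a + r) \<partial>nuS) = (\<integral>\<^sup>+w. G r w \<partial>lborel)" .
  qed
  also have "\<dots> = (\<integral>\<^sup>+w. \<integral>\<^sup>+r. G r w \<partial>L \<partial>lborel)"
  proof -
    interpret P: pair_sigma_finite L lborel ..
    have "sets (L \<Otimes>\<^sub>M lborel) = sets (borel \<Otimes>\<^sub>M borel)"
      by (intro sets_pair_measure_cong) (simp_all add: sets_L)
    then have "case_prod G \<in> borel_measurable (L \<Otimes>\<^sub>M lborel)"
      using measurable_cong_sets Gm by blast
    then show ?thesis using P.Fubini'[of G] by simp
  qed
  also have "\<dots> = (\<integral>\<^sup>+w. ennreal (1/mS) * f w * (\<integral>\<^sup>+\<omega>. (if in_gap (V \<omega>) k w then 1 else 0) \<partial>M) \<partial>lborel)"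
    unfolding gap_probability L_def[symmetric] G_def
    by (intro nn_integral_cong, subst nn_integral_cmult[symmetric]) (auto simp: mult_ac)
  finally show ?thesis .
qed

text \<open>Campbell's formula: the expected number of arrivals weighted by \<open>f\<close> equals
  \<open>m_S\<^sup>-\<^sup>1 \<integral>\<^sub>0\<^sup>\<infinity> f\<close>, since almost surely the gaps partition \<open>(0,\<infinity>)\<close> up to a null set.\<close>
lemma campbell:
  fixes f :: "real \<Rightarrow> ennreal"
  assumes f[measurable]: "f \<in> borel_measurable borel"
  shows "(\<Sum>k. \<integral>\<^sup>+\<omega>. f (arrival (V \<omega>) k) \<partial>M) = ennreal (1/mS) * (\<integral>\<^sup>+w. f w * indicator {0<..} w \<partial>lborel)"
proof -
  define c where "c = ennreal (1/mS)"
  define Q where "Q \<omega> w = (\<Sum>k. if in_gap (V \<omega>) k w then 1 else 0 :: ennreal)" for \<omega> w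
  have Qm: "(\<lambda>(\<omega>, w). c * f w * Q \<omega> w) \<in> borel_measurable (M \<Otimes>\<^sub>M lborel)"
    unfolding Q_def by measurable
  have Q_regular: "(\<integral>\<^sup>+w. c * f w * Q \<omega> w \<partial>lborel) = c * (\<integral>\<^sup>+w. f w * indicator {0<..} w \<partial>lborel)"
    if g: "regular TS (V \<omega>)" for \<omega>
  proof -
    have "AE w in lborel. w \<notin> range (psum (V \<omega>))"
      by (intro AE_I'[of "range (psum (V \<omega>))"] countable_imp_null_set_lborel) auto
    then have "AE w in lborel. c * f w * Q \<omega> w = c * (f w * indicator {0<..} w)"
    proof eventually_elim
      case (elim w)
      then have "\<forall>n. psum (V \<omega>) n \<noteq> w" by auto
      then show ?case by (simp add: Q_def gap_indicator_sum[OF g] mult_ac)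
    qed
    then have "(\<integral>\<^sup>+w. c * f w * Q \<omega> w \<partial>lborel) = (\<integral>\<^sup>+w. c * (f w * indicator {0<..} w) \<partial>lborel)"
      by (rule nn_integral_cong_AE)
    also have "\<dots> = c * (\<integral>\<^sup>+w. f w * indicator {0<..} w \<partial>lborel)"
      by (rule nn_integral_cmult) simp
    finally show ?thesis .
  qed
  have "(\<Sum>k. \<integral>\<^sup>+\<omega>. f (arrival (V \<omega>) k) \<partial>M)
      = (\<Sum>k. \<integral>\<^sup>+w. c * f w * (\<integral>\<^sup>+\<omega>. (if in_gap (V \<omega>) k w then 1 else 0) \<partial>M) \<partial>lborel)"
    unfolding c_def using arrival_integral by simp
  also have "\<dots> = (\<integral>\<^sup>+w. \<integral>\<^sup>+\<omega>. c * f w * Q \<omega> w \<partial>M \<partial>lborel)"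
    by (subst nn_integral_suminf[symmetric], measurable)
      (simp add: Q_def nn_integral_suminf[symmetric] nn_integral_cmult ennreal_suminf_cmult)
  also have "\<dots> = (\<integral>\<^sup>+\<omega>. \<integral>\<^sup>+w. c * f w * Q \<omega> w \<partial>lborel \<partial>M)"
  proof -
    interpret P: pair_sigma_finite M lborel ..
    show ?thesis using P.Fubini'[of "\<lambda>\<omega> w. c * f w * Q \<omega> w"] Qm by simp
  qed
  also have "\<dots> = (\<integral>\<^sup>+\<omega>. c * (\<integral>\<^sup>+w. f w * indicator {0<..} w \<partial>lborel) \<partial>M)"
    using AE_regular by (intro nn_integral_cong_AE) (auto elim!: AE_mp intro!: Q_regular)
  also have "\<dots> = c * (\<integral>\<^sup>+w. f w * indicator {0<..} w \<partial>lborel)"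
    by (simp add: emeasure_space_1)
  finally show ?thesis unfolding c_def .
qed

text \<open>The \<open>k\<close>-th interarrival interval \<open>[T\<^sub>k\<^sub>+\<^sub>1, T\<^sub>k\<^sub>+\<^sub>2)\<close> straddles the window \<open>(s,s+x]\<close> with
  probability \<open>E[tail(s + x - T\<^sub>k\<^sub>+\<^sub>1); T\<^sub>k\<^sub>+\<^sub>1 \<le> s]\<close>, by independence of \<open>X\<^sub>k\<close> and \<open>T\<^sub>k\<^sub>+\<^sub>1\<close>.\<close>
lemma straddle_prob:
  "emeasure M {\<omega>\<in>space M. arrival (V \<omega>) k \<le> s \<and> s + x < arrival (V \<omega>) (Suc k)}
   = (\<integral>\<^sup>+\<omega>. indicator {..s} (arrival (V \<omega>) k) * ennreal (tail (s + x - arrival (V \<omega>) k)) \<partial>M)"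
proof -
  let ?h = "\<lambda>(a::real, b::real). indicator {..s} b * indicator {s + x - b<..} a :: ennreal"
  have "?h = (\<lambda>(a, b). if b \<le> s \<and> s + x - b < a then 1 else 0)"
    by (auto simp: fun_eq_iff split: split_indicator)
  then have hm: "?h \<in> borel_measurable (borel \<Otimes>\<^sub>M borel)" by simp
  have "emeasure M {\<omega>\<in>space M. arrival (V \<omega>) k \<le> s \<and> s + x < arrival (V \<omega>) (Suc k)}
      = (\<integral>\<^sup>+\<omega>. indicator {\<omega>\<in>space M. arrival (V \<omega>) k \<le> s \<and> s + x < arrival (V \<omega>) (Suc k)} \<omega> \<partial>M)"
    by (rule nn_integral_indicator[symmetric]) measurable
  also have "\<dots> = (\<integral>\<^sup>+\<omega>. ?h (V \<omega> (Some k), arrival (V \<omega>) k) \<partial>M)"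
    by (intro nn_integral_cong) (auto simp: arrival_Suc split: split_indicator)
  also have "\<dots> = (\<integral>\<^sup>+b. \<integral>\<^sup>+a. ?h (a, b) \<partial>\<mu> \<partial>distr M borel (\<lambda>\<omega>. arrival (V \<omega>) k))"
    using indep_pair_nn_integral[OF indep_inter_arrival hm] by (simp add: law_inter)
  also have "\<dots> = (\<integral>\<^sup>+b. indicator {..s} b * ennreal (tail (s + x - b)) \<partial>distr M borel (\<lambda>\<omega>. arrival (V \<omega>) k))"
    by (intro nn_integral_cong) (simp add: nn_integral_cmult_indicator tail_emeasure)
  also have "\<dots> = (\<integral>\<^sup>+\<omega>. indicator {..s} (arrival (V \<omega>) k) * ennreal (tail (s + x - arrival (V \<omega>) k)) \<partial>M)"
    by (subst nn_integral_distr) auto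
  finally show ?thesis .
qed

lemma no_renewal_decomposition:
  assumes x: "0 \<le> x"
  shows "emeasure M {\<omega>\<in>space M. \<not> renews (V \<omega>) s (s + x)}
     = emeasure nuS {s + x<..} + (\<Sum>k. emeasure M {\<omega>\<in>space M. arrival (V \<omega>) k \<le> s \<and> s + x < arrival (V \<omega>) (Suc k)})"
proof -
  let ?A = "{\<omega>\<in>space M. regular TS (V \<omega>) \<and> s + x < V \<omega> None}"
  let ?B = "\<lambda>k. {\<omega>\<in>space M. regular TS (V \<omega>) \<and> arrival (V \<omega>) k \<le> s \<and> s + x < arrival (V \<omega>) (Suc k)}"
  have "emeasure M {\<omega>\<in>space M. \<not> renews (V \<omega>) s (s + x)} = emeasure M (?A \<union> (\<Union>k. ?B k))"
    using AE_regular by (intro emeasure_eq_AE) (auto simp: no_renewal_iff[OF _ x] elim!: AE_mp)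
  also have "\<dots> = emeasure M ?A + emeasure M (\<Union>k. ?B k)"
  proof (rule plus_emeasure[symmetric])
    show "?A \<inter> (\<Union>k. ?B k) = {}"
    proof (rule equals0I)
      fix \<omega> assume "\<omega> \<in> ?A \<inter> (\<Union>k. ?B k)"
      then obtain k where "regular TS (V \<omega>)" "s + x < V \<omega> None" "arrival (V \<omega>) k \<le> s" by auto
      then show False using arrival_ge_first[of TS "V \<omega>" k] x by simp
    qed
  qed measurable
  also have "emeasure M (\<Union>k. ?B k) = (\<Sum>k. emeasure M (?B k))"
  proof (rule suminf_emeasure[symmetric])
    show "disjoint_family ?B"
    proof (unfold disjoint_family_on_def, intro ballI impI)
      fix k k' :: nat assume "k \<noteq> k'"
      then have "Suc k \<le> k' \<or> Suc k' \<le> k" by linarith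
      then show "?B k \<inter> ?B k' = {}"
        using arrival_mono[of TS _ "Suc k" k'] arrival_mono[of TS _ "Suc k'" k] x by fastforce
    qed
  qed auto
  also have "emeasure M ?A = emeasure nuS {s + x<..}"
  proof -
    have "emeasure M ?A = emeasure M {\<omega>\<in>space M. s + x < V \<omega> None}"
      using AE_regular by (intro emeasure_eq_AE) (auto elim!: AE_mp)
    also have "\<dots> = emeasure (distr M borel (\<lambda>\<omega>. V \<omega> None)) {s + x<..}"
      by (subst emeasure_distr) (auto intro!: arg_cong[where f="emeasure M"])
    finally show ?thesis unfolding law_first .
  qed
  also have "(\<lambda>k. emeasure M (?B k)) = (\<lambda>k. emeasure M {\<omega>\<in>space M. arrival (V \<omega>) k \<le> s \<and> s + x < arrival (V \<omega>) (Suc k)})"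
    using AE_regular by (intro ext emeasure_eq_AE) (auto elim!: AE_mp)
  finally show ?thesis .
qed

text \<open>Splitting \<open>\<integral>\<^sub>x\<^sup>\<infinity> tail\<close> at \<open>s+x\<close> and reflecting the piece over \<open>(x,s+x]\<close>.\<close>
lemma tail_integral_split:
  assumes s: "0 \<le> s" and x: "0 \<le> x"
  shows "(\<integral>\<^sup>+t. indicator {0<..} t * ennreal (tail t) * indicator {x<..} t \<partial>lborel)
     = (\<integral>\<^sup>+t. indicator {0<..} t * ennreal (tail t) * indicator {s+x<..} t \<partial>lborel)
       + (\<integral>\<^sup>+w. indicator {..s} w * ennreal (tail (s + x - w)) * indicator {0<..} w \<partial>lborel)"
proof -
  have "(\<integral>\<^sup>+t. indicator {0<..} t * ennreal (tail t) * indicator {x<..} t \<partial>lborel)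
     = (\<integral>\<^sup>+t. indicator {0<..} t * ennreal (tail t) * indicator {s+x<..} t
           + ennreal (tail t) * indicator {x<..s+x} t \<partial>lborel)"
    using s x by (intro nn_integral_cong) (auto split: split_indicator)
  also have "\<dots> = (\<integral>\<^sup>+t. indicator {0<..} t * ennreal (tail t) * indicator {s+x<..} t \<partial>lborel)
      + (\<integral>\<^sup>+t. ennreal (tail t) * indicator {x<..s+x} t \<partial>lborel)"
    by (rule nn_integral_add) auto
  also have "(\<integral>\<^sup>+t. ennreal (tail t) * indicator {x<..s+x} t \<partial>lborel)
      = (\<integral>\<^sup>+w. ennreal (tail (s + x - w)) * indicator {x<..s+x} (s + x - w) \<partial>lborel)"
    using nn_integral_real_affine[of "\<lambda>t. ennreal (tail t) * indicator {x<..s+x} t" "-1" "s + x"] by simp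
  also have "\<dots> = (\<integral>\<^sup>+w. indicator {..s} w * ennreal (tail (s + x - w)) * indicator {0<..} w \<partial>lborel)"
  proof (rule nn_integral_cong_AE)
    have "AE w in lborel. w \<notin> {0, s}"
      by (intro AE_I'[of "{0, s}"] countable_imp_null_set_lborel) auto
    then show "AE w in lborel. ennreal (tail (s + x - w)) * indicator {x<..s+x} (s + x - w)
        = indicator {..s} w * ennreal (tail (s + x - w)) * indicator {0<..} w"
      by eventually_elim (auto split: split_indicator)
  qed
  finally show ?thesis .
qed

text \<open>Stationarity: the probability of no renewal in \<open>(s,s+x]\<close> does not depend on \<open>s\<close>
  and equals \<open>\<nu>_S((x,\<infinity>))\<close>. Combine the decomposition with Campbell's formula.\<close>
lemma no_renewal_prob:
  assumes s: "0 \<le> s" and x: "0 \<le> x"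
  shows "emeasure M {\<omega>\<in>space M. \<not> renews (V \<omega>) s (s + x)} = emeasure nuS {x<..}"
proof -
  have "(\<Sum>k. emeasure M {\<omega>\<in>space M. arrival (V \<omega>) k \<le> s \<and> s + x < arrival (V \<omega>) (Suc k)})
      = (\<Sum>k. \<integral>\<^sup>+\<omega>. indicator {..s} (arrival (V \<omega>) k) * ennreal (tail (s + x - arrival (V \<omega>) k)) \<partial>M)"
    by (simp add: straddle_prob)
  also have "\<dots> = ennreal (1/mS) * (\<integral>\<^sup>+w. indicator {..s} w * ennreal (tail (s + x - w)) * indicator {0<..} w \<partial>lborel)"
    by (rule campbell) simp
  finally show ?thesis
    unfolding no_renewal_decomposition[OF x] nu_tail_integral tail_integral_split[OF s x]
    by (simp add: distrib_left)
qed

lemma renewal_prob: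
  assumes s: "0 \<le> s" and x: "0 \<le> x"
  shows "prob {\<omega>\<in>space M. renews (V \<omega>) s (s + x)} = 1 - measure nuS {x<..}"
proof -
  have "{\<omega>\<in>space M. renews (V \<omega>) s (s + x)} = space M - {\<omega>\<in>space M. \<not> renews (V \<omega>) s (s + x)}" by auto
  then have "prob {\<omega>\<in>space M. renews (V \<omega>) s (s + x)} = 1 - prob {\<omega>\<in>space M. \<not> renews (V \<omega>) s (s + x)}"
    by (simp add: prob_compl)
  also have "prob {\<omega>\<in>space M. \<not> renews (V \<omega>) s (s + x)} = measure nuS {x<..}"
    using no_renewal_prob[OF s x] by (simp add: measure_def)
  finally show ?thesis .
qed

text \<open>Renewals in both of two adjacent windows, by inclusion-exclusion and \<open>renews_split\<close>.\<close>
lemma renewal_prob2: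
  assumes s: "0 \<le> s" and x: "0 \<le> x" and z: "0 \<le> z"
  shows "prob {\<omega>\<in>space M. renews (V \<omega>) s (s + x) \<and> renews (V \<omega>) (s + x) (s + x + z)}
     = 1 - measure nuS {x<..} - measure nuS {z<..} + measure nuS {x + z<..}"
proof -
  let ?A = "{\<omega>\<in>space M. renews (V \<omega>) s (s + x)}"
  let ?B = "{\<omega>\<in>space M. renews (V \<omega>) (s + x) (s + x + z)}"
  have AB: "?A \<inter> ?B = {\<omega>\<in>space M. renews (V \<omega>) s (s + x) \<and> renews (V \<omega>) (s + x) (s + x + z)}" by auto
  have U: "?A \<union> ?B = {\<omega>\<in>space M. renews (V \<omega>) s (s + (x + z))}" using renews_split[OF x z] by auto
  have sA: "?A \<in> events" and sB: "?B \<in> events" by measurable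
  have "prob (?A \<union> ?B) = prob ?A + prob (?B - ?A)" using sA sB by (rule finite_measure_Union')
  moreover have "prob (?B - ?A) = prob ?B - prob (?A \<inter> ?B)"
    using sB sA finite_measure_Diff' by (simp add: Int_commute)
  moreover have "prob ?A = 1 - measure nuS {x<..}" using renewal_prob[OF s x] .
  moreover have "prob ?B = 1 - measure nuS {z<..}" using renewal_prob[of "s + x" z] s x z by simp
  moreover have "prob (?A \<union> ?B) = 1 - measure nuS {x + z<..}" unfolding U using renewal_prob[of s "x + z"] s x z by simp
  ultimately show ?thesis unfolding AB by linarith
qed

end

section \<open>An i.i.d. family of renewal processes indexed by sites\<close>

abbreviation seq_space :: "(nat option \<Rightarrow> real) measure" where
  "seq_space \<equiv> PiM UNIV (\<lambda>_. borel)"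

locale site_family = interarrival_law \<mu> + prob_space M
  for \<mu> :: "real measure" and M :: "'a measure" +
  fixes Y :: "int \<Rightarrow> nat option \<Rightarrow> 'a \<Rightarrow> real"
  assumes indep: "indep_vars (\<lambda>_. borel) (\<lambda>(i, j). Y i j) UNIV"
    and law_first: "\<And>i. distr M borel (Y i None) = nuS"
    and law_inter: "\<And>i k. distr M borel (Y i (Some k)) = \<mu>"
begin

abbreviation "SR \<equiv> SR_space \<mu>"

definition site :: "int \<Rightarrow> 'a \<Rightarrow> nat option \<Rightarrow> real" where "site i \<omega> = (\<lambda>j. Y i j \<omega>)"

lemma rvY[measurable]: "Y i j \<in> borel_measurable M"
  using indep unfolding indep_vars_def by auto

lemma site_restrict: "site i = (\<lambda>\<omega>. \<lambda>j\<in>UNIV. Y i j \<omega>)"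
  by (simp add: site_def restrict_UNIV fun_eq_iff)

lemma site_meas[measurable]: "site i \<in> measurable M seq_space"
  unfolding site_restrict by (intro measurable_restrict) simp

lemma nu_prob: "prob_space nuS"
  by (subst law_first[of 0, symmetric]) (rule prob_space_distr, simp)

lemma SR_prob: "prob_space SR"
  unfolding SR_space_def using nu_prob MU.prob_space_axioms
  by (intro prob_space_PiM) (auto split: option.split)

lemma sets_SR[measurable_cong]: "sets SR = sets seq_space"
  unfolding SR_space_def by (intro sets_PiM_cong) (auto split: option.split simp: mu_sets)

lemma space_SR: "space SR = UNIV"
  using sets_eq_imp_space_eq[OF sets_SR] by (simp add: space_PiM)

text \<open>Each site carries an \<open>SR(\<mu>_S)\<close>-process: its data are independent with the prescribed
  laws, so its joint law is the product measure \<open>SR_space \<mu>\<close>.\<close>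
lemma distr_site: "distr M seq_space (site i) = SR"
proof -
  have "indep_vars (\<lambda>_. borel) (\<lambda>j. (\<lambda>(i, j). Y i j) (i, j)) UNIV"
    using indep by (rule indep_vars_reindex) (auto simp: inj_on_def)
  then have "distr M seq_space (\<lambda>\<omega>. \<lambda>j\<in>UNIV. Y i j \<omega>) = PiM UNIV (\<lambda>j. distr M borel (Y i j))"
    by (subst (asm) indep_vars_iff_distr_eq_PiM') auto
  also have "PiM UNIV (\<lambda>j. distr M borel (Y i j)) = SR"
    unfolding SR_space_def by (intro PiM_cong) (auto split: option.split simp: law_first law_inter)
  finally show ?thesis by (simp add: site_restrict)
qed

lemma indep_sites: "indep_vars (\<lambda>_. seq_space) site UNIV"
proof -
  have 1: "indep_vars (\<lambda>i. PiM ({i} \<times> UNIV) (\<lambda>_. borel))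
      (\<lambda>i \<omega>. restrict (\<lambda>p. (\<lambda>(i, j). Y i j) p \<omega>) ({i} \<times> UNIV)) UNIV"
    using indep by (rule indep_vars_restrict) (auto simp: disjoint_family_on_def)
  have "indep_vars (\<lambda>_. seq_space) (\<lambda>i \<omega>. (\<lambda>f. \<lambda>j. f (i, j)) (restrict (\<lambda>p. (\<lambda>(i, j). Y i j) p \<omega>) ({i} \<times> UNIV))) UNIV"
  proof (rule indep_vars_compose2[OF 1])
    fix i :: int
    have "(\<lambda>f. \<lambda>j\<in>UNIV. f (i, j)) \<in> measurable (PiM ({i} \<times> UNIV) (\<lambda>_. borel)) seq_space"
      by (intro measurable_restrict) (auto intro!: measurable_component_singleton)
    then show "(\<lambda>f. \<lambda>j. f (i, j)) \<in> measurable (PiM ({i} \<times> UNIV) (\<lambda>_. borel)) seq_space"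
      by (simp add: restrict_UNIV)
  qed
  moreover have "(\<lambda>i \<omega>. (\<lambda>f. \<lambda>j. f (i, j)) (restrict (\<lambda>p. (\<lambda>(i, j). Y i j) p \<omega>) ({i} \<times> UNIV))) = site"
    by (simp add: site_def fun_eq_iff)
  ultimately show ?thesis by simp
qed

lemma SR_renewal: "renewal \<mu> SR (\<lambda>y. y)"
proof -
  interpret S: prob_space SR by (rule SR_prob)
  have comp: "distr SR borel (\<lambda>y. y j) = (case j of None \<Rightarrow> nuS | Some k \<Rightarrow> \<mu>)" for j
  proof -
    have "distr SR borel (\<lambda>y. y j) = distr SR (case j of None \<Rightarrow> nuS | Some k \<Rightarrow> \<mu>) (\<lambda>y. y j)"
      by (intro distr_cong) (auto split: option.split simp: mu_sets)
    also have "\<dots> = (case j of None \<Rightarrow> nuS | Some k \<Rightarrow> \<mu>)"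
      unfolding SR_space_def using nu_prob MU.prob_space_axioms
      by (subst distr_PiM_component) (auto split: option.split)
    finally show ?thesis .
  qed
  have "S.indep_vars (\<lambda>_. borel) (\<lambda>j y. y j) UNIV"
  proof (subst S.indep_vars_iff_distr_eq_PiM')
    have "distr SR seq_space (\<lambda>x. \<lambda>j\<in>UNIV. x j) = SR"
      by (simp add: restrict_UNIV) (rule distr_id2, simp add: sets_SR)
    also have "\<dots> = (\<Pi>\<^sub>M j\<in>UNIV. distr SR borel (\<lambda>y. y j))"
      using comp by (simp add: SR_space_def)
    finally show "distr SR seq_space (\<lambda>x. \<lambda>j\<in>UNIV. x j) = (\<Pi>\<^sub>M j\<in>UNIV. distr SR borel (\<lambda>y. y j))" .
  qed (auto simp: measurable_cong_sets[OF sets_SR refl])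
  then show ?thesis
    using comp[of None] comp[of "Some k" for k] by unfold_locales auto
qed

sublocale SRr: renewal \<mu> SR "\<lambda>y. y" by (rule SR_renewal)

lemma prob_site: "A \<in> sets SR \<Longrightarrow> prob (site i -` A \<inter> space M) = SRr.prob A"
proof -
  assume A: "A \<in> sets SR"
  have "prob (site i -` A \<inter> space M) = measure (distr M seq_space (site i)) A"
    using A by (subst measure_distr) (auto simp: sets_SR)
  then show ?thesis by (simp add: distr_site)
qed

lemma AE_site: "(AE y in SR. P y) \<Longrightarrow> AE \<omega> in M. P (site i \<omega>)"
proof -
  assume "AE y in SR. P y"
  then have "AE y in distr M seq_space (site i). P y" unfolding distr_site .
  then show ?thesis by (rule AE_distrD[rotated]) simp
qed

lemma AE_regular_sites: "AE \<omega> in M. \<forall>i. regular TS (site i \<omega>)"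
  unfolding AE_all_countable using SRr.AE_regular by (intro allI AE_site) simp

end

section \<open>The time \<open>\<Theta>\<^sub>t\<^sub>0\<^sub>,\<^sub>t\<^sub>1\<close> on regular outcomes\<close>

locale window_pair = site_family \<mu> M Y
  for \<mu> :: "real measure" and M :: "'a measure" and Y :: "int \<Rightarrow> nat option \<Rightarrow> 'a \<Rightarrow> real" +
  fixes t0 t1 :: real
  assumes t0: "0 \<le> t0" and t01: "t0 < t1" and t10: "t1 < t0 + 1"
begin

definition "u = t1 - t0"
definition "s0 = TS * t0"
definition "s1 = TS * t1"

text \<open>\<open>\<zeta>\<^sub>t\<^sub>0\<^sub>,\<^sub>u(i) = 1\<close>: site \<open>i\<close> renews in the first window.\<close>
definition renewed :: "int \<Rightarrow> 'a \<Rightarrow> bool" where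
  "renewed i \<omega> \<longleftrightarrow> renews (site i \<omega>) s0 s1"

text \<open>\<open>\<zeta>\<^sub>t\<^sub>1\<^sub>,\<^sub>h(i) = 1\<close>: site \<open>i\<close> renews in the second window of length \<open>T_S h\<close>.\<close>
definition renewed_after :: "real \<Rightarrow> int \<Rightarrow> 'a \<Rightarrow> bool" where
  "renewed_after h i \<omega> \<longleftrightarrow> renews (site i \<omega>) s1 (TS * (t1 + h))"

text \<open>\<open>i \<in> C(\<zeta>\<^sub>t\<^sub>0\<^sub>,\<^sub>u, 0)\<close>: all sites between \<open>0\<close> and \<open>i\<close> renew in the first window.\<close>
definition in_cluster :: "int \<Rightarrow> 'a \<Rightarrow> bool" where
  "in_cluster i \<omega> \<longleftrightarrow> (\<forall>k. min 0 i \<le> k \<and> k \<le> max 0 i \<longrightarrow> renewed k \<omega>)"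

text \<open>The event \<open>\<Theta> \<le> h\<close>: every site of the cluster of \<open>0\<close> renews in the second window.\<close>
definition cluster_renewed :: "real \<Rightarrow> 'a \<Rightarrow> bool" where
  "cluster_renewed h \<omega> \<longleftrightarrow> (\<forall>i. in_cluster i \<omega> \<longrightarrow> renewed_after h i \<omega>)"

definition all_regular :: "'a \<Rightarrow> bool" where
  "all_regular \<omega> \<longleftrightarrow> (\<forall>i. regular TS (site i \<omega>))"

lemma u_pos: "0 < u" and u_lt1: "u < 1" using t01 t10 by (auto simp: u_def)
lemma s1_eq: "s1 = s0 + TS * u" by (simp add: s1_def s0_def u_def algebra_simps)
lemma s0_nonneg: "0 \<le> s0" using t0 T_pos by (simp add: s0_def)
lemma Tu_nonneg: "0 \<le> TS * u" using u_pos T_pos by simp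

lemma meas_renewed[measurable]: "Measurable.pred M (renewed i)" unfolding renewed_def by measurable
lemma meas_renewed_after[measurable]: "Measurable.pred M (renewed_after h i)" unfolding renewed_after_def by measurable
lemma meas_in_cluster[measurable]: "Measurable.pred M (in_cluster i)" unfolding in_cluster_def by measurable
lemma meas_cluster_renewed[measurable]: "Measurable.pred M (cluster_renewed h)" unfolding cluster_renewed_def by measurable
lemma meas_all_regular[measurable]: "Measurable.pred M all_regular" unfolding all_regular_def by measurable

lemma AE_all_regular: "AE \<omega> in M. all_regular \<omega>"
  unfolding all_regular_def by (rule AE_regular_sites)

lemma zeta_first_window:
  assumes "all_regular \<omega>"
  shows "SR_zeta \<mu> Y t0 (t1 - t0) i \<omega> = (if renewed i \<omega> then 1 else 0)"
proof -
  have g: "regular TS (site i \<omega>)" using assms by (simp add: all_regular_def)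
  have "SR_zeta \<mu> Y t0 (t1 - t0) i \<omega> = min (SR_count (site i \<omega>) s1 - SR_count (site i \<omega>) s0) 1"
    unfolding SR_zeta_def SR_N_def site_def s1_def s0_def by simp
  then show ?thesis unfolding min_diff SR_count_less_iff[OF g] renewed_def by simp
qed

lemma zeta_second_window:
  assumes "all_regular \<omega>"
  shows "SR_zeta \<mu> Y t1 t i \<omega> = (if renewed_after t i \<omega> then 1 else 0)"
proof -
  have g: "regular TS (site i \<omega>)" using assms by (simp add: all_regular_def)
  have "SR_zeta \<mu> Y t1 t i \<omega> = min (SR_count (site i \<omega>) (TS * (t1 + t)) - SR_count (site i \<omega>) s1) 1"
    unfolding SR_zeta_def SR_N_def site_def s1_def by simp
  then show ?thesis unfolding min_diff SR_count_less_iff[OF g] renewed_after_def by simp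
qed

lemma consec_comp_iff:
  assumes "all_regular \<omega>"
  shows "i \<in> consec_comp (\<lambda>i. SR_zeta \<mu> Y t0 (t1 - t0) i \<omega>) 0 \<longleftrightarrow> in_cluster i \<omega>"
proof (cases "renewed 0 \<omega>")
  case True
  then show ?thesis unfolding consec_comp_def in_cluster_def zeta_first_window[OF assms] by simp blast
next
  case False
  have "min 0 i \<le> 0 \<and> 0 \<le> max 0 i" by simp
  then have "\<not> in_cluster i \<omega>" using False unfolding in_cluster_def by blast
  then show ?thesis using False unfolding consec_comp_def zeta_first_window[OF assms] by simp
qed

definition hit_times :: "'a \<Rightarrow> real set" where
  "hit_times \<omega> = {t. 0 < t \<and> cluster_renewed t \<omega>}"

lemma Theta_eq:
  assumes "all_regular \<omega>"
  shows "SR_Theta \<mu> Y t0 t1 \<omega> = Inf (hit_times \<omega>)"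
proof -
  have "(\<forall>i\<in>consec_comp (\<lambda>i. SR_zeta \<mu> Y t0 (t1 - t0) i \<omega>) 0. SR_zeta \<mu> Y t1 t i \<omega> = 1)
     \<longleftrightarrow> cluster_renewed t \<omega>" for t
    unfolding Ball_def consec_comp_iff[OF assms] zeta_second_window[OF assms] cluster_renewed_def
    by simp blast
  then show ?thesis unfolding SR_Theta_def hit_times_def by simp
qed

lemma cluster_renewed_mono:
  assumes "h \<le> h'" and "cluster_renewed h \<omega>"
  shows "cluster_renewed h' \<omega>"
proof -
  have "TS * (t1 + h) \<le> TS * (t1 + h')" using assms(1) T_pos by simp
  then show ?thesis using assms(2) renews_mono unfolding cluster_renewed_def renewed_after_def by blast
qed

lemma cluster_renewed_right_cont:
  assumes reg: "all_regular \<omega>" and H: "\<And>t. h < t \<Longrightarrow> cluster_renewed t \<omega>"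
  shows "cluster_renewed h \<omega>"
  unfolding cluster_renewed_def renewed_after_def
proof (intro allI impI)
  fix i assume "in_cluster i \<omega>"
  show "renews (site i \<omega>) s1 (TS * (t1 + h))"
  proof (rule renews_right_cont)
    show "regular TS (site i \<omega>)" using reg by (simp add: all_regular_def)
    fix x assume "TS * (t1 + h) < x"
    then have "h < x / TS - t1" using T_pos by (simp add: field_simps)
    then have "renews (site i \<omega>) s1 (TS * (t1 + (x / TS - t1)))"
      using H \<open>in_cluster i \<omega>\<close> unfolding cluster_renewed_def renewed_after_def by blast
    then show "renews (site i \<omega>) s1 x" using T_pos by simp
  qed
qed

text \<open>Since \<open>t\<^sub>1 - t\<^sub>0 < 1\<close>, every site that renewed in the first window renews again within
  time \<open>T_S\<close> after \<open>T_S t\<^sub>1\<close>; hence \<open>\<Theta> \<le> 1\<close>.\<close>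
lemma cluster_renewed_1: "all_regular \<omega> \<Longrightarrow> cluster_renewed 1 \<omega>"
  unfolding cluster_renewed_def in_cluster_def renewed_after_def all_regular_def
proof (intro allI impI)
  fix i assume reg: "\<forall>i. regular TS (site i \<omega>)"
    and cl: "\<forall>k. min 0 i \<le> k \<and> k \<le> max 0 i \<longrightarrow> renewed k \<omega>"
  have "min 0 i \<le> i \<and> i \<le> max 0 i" by simp
  then have "renews (site i \<omega>) s0 s1" using cl unfolding renewed_def by blast
  moreover have "regular TS (site i \<omega>)" using reg by simp
  ultimately have "renews (site i \<omega>) s1 (s1 + TS)" by (intro renews_next_window)
  then show "renews (site i \<omega>) s1 (TS * (t1 + 1))" by (simp add: s1_def algebra_simps)
qed

lemma Theta_le_iff:
  assumes reg: "all_regular \<omega>" and h: "0 \<le> h"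
  shows "SR_Theta \<mu> Y t0 t1 \<omega> \<le> h \<longleftrightarrow> cluster_renewed h \<omega>"
proof -
  have in_S: "t \<in> hit_times \<omega>" if "cluster_renewed h' \<omega>" "0 \<le> h'" "h' < t" for h' t
    using that cluster_renewed_mono[of h' t] by (simp add: hit_times_def)
  have "2 \<in> hit_times \<omega>" using in_S[OF cluster_renewed_1[OF reg]] by simp
  then have ne: "hit_times \<omega> \<noteq> {}" by blast
  have bdd: "bdd_below (hit_times \<omega>)" unfolding hit_times_def by (intro bdd_belowI[of _ 0]) auto
  show ?thesis unfolding Theta_eq[OF reg]
  proof
    assume le: "Inf (hit_times \<omega>) \<le> h"
    show "cluster_renewed h \<omega>"
    proof (rule cluster_renewed_right_cont[OF reg])
      fix t assume "h < t"
      then have "Inf (hit_times \<omega>) < t" using le by simp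
      then obtain s where "s \<in> hit_times \<omega>" "s < t"
        using cInf_less_iff[OF ne bdd] by blast
      then show "cluster_renewed t \<omega>" using cluster_renewed_mono[of s t] by (simp add: hit_times_def)
    qed
  next
    assume c: "cluster_renewed h \<omega>"
    show "Inf (hit_times \<omega>) \<le> h"
    proof (rule field_le_epsilon)
      fix e :: real assume "0 < e"
      then have "h + e \<in> hit_times \<omega>" using in_S[OF c h] by simp
      then show "Inf (hit_times \<omega>) \<le> h + e" using bdd by (rule cInf_lower)
    qed
  qed
qed

lemma Theta_range:
  assumes reg: "all_regular \<omega>"
  shows "SR_Theta \<mu> Y t0 t1 \<omega> \<in> {0..1}"
proof -
  have "2 \<in> hit_times \<omega>"
    using cluster_renewed_mono[of 1 2 \<omega>] cluster_renewed_1[OF reg] by (simp add: hit_times_def)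
  then have "hit_times \<omega> \<noteq> {}" by blast
  then have "0 \<le> Inf (hit_times \<omega>)" by (rule cInf_greatest) (simp add: hit_times_def)
  moreover have "SR_Theta \<mu> Y t0 t1 \<omega> \<le> 1"
    using Theta_le_iff[OF reg, of 1] cluster_renewed_1[OF reg] by simp
  ultimately show ?thesis using Theta_eq[OF reg] by simp
qed

section \<open>Single-site probabilities\<close>

lemma pred_SR_count_less[measurable]: "Measurable.pred SR (\<lambda>y. SR_count y a < SR_count y b)"
proof -
  have [measurable]: "(\<lambda>y. SR_count y t) \<in> measurable SR (count_space UNIV)" for t
    by (rule measurable_SR_count[where V="\<lambda>y. y"]) simp
  have "{y\<in>space SR. SR_count y a < SR_count y b}
      = (\<Union>n. {y\<in>space SR. SR_count y a = n} \<inter> {y\<in>space SR. n < SR_count y b})"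
    by auto
  also have "\<dots> \<in> sets SR" by measurable
  finally show ?thesis by (simp add: pred_def)
qed

text \<open>\<open>\<alpha> = \<nu>_S((T_S u, \<infinity>))\<close> is the probability that a site does not renew in the first window,
  and \<open>g\<^sub>u(h)\<close> the probability that it renews in both windows.\<close>
definition "alpha = measure nuS {TS * u<..}"

definition g_u :: "real \<Rightarrow> real" where
  "g_u h = 1 - measure nuS {TS * u<..} - measure nuS {TS * h<..} + measure nuS {TS * u + TS * h<..}"

definition "Ren0 = {y\<in>space SR. renews y s0 s1}"
definition "Ren1 h = {y\<in>space SR. renews y s1 (TS * (t1 + h))}"

lemma Ren0_sets[measurable]: "Ren0 \<in> sets SR" unfolding Ren0_def by measurable
lemma Ren1_sets[measurable]: "Ren1 h \<in> sets SR" unfolding Ren1_def by measurable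

lemma prob_Ren0: "SRr.prob Ren0 = 1 - alpha"
proof -
  have "Ren0 = {\<omega>\<in>space SR. renews \<omega> s0 (s0 + TS * u)}" unfolding Ren0_def s1_eq ..
  then show ?thesis using SRr.renewal_prob[OF s0_nonneg Tu_nonneg] by (simp add: alpha_def)
qed

lemma prob_not_Ren0: "SRr.prob (space SR - Ren0) = alpha"
  using prob_Ren0 by (simp add: SRr.prob_compl)

lemma prob_Ren01: "0 \<le> h \<Longrightarrow> SRr.prob (Ren0 \<inter> Ren1 h) = g_u h"
proof -
  assume h: "0 \<le> h"
  have "Ren0 \<inter> Ren1 h = {\<omega>\<in>space SR. renews \<omega> s0 (s0 + TS * u) \<and> renews \<omega> (s0 + TS * u) (s0 + TS * u + TS * h)}"
    unfolding Ren0_def Ren1_def s1_eq by (auto simp: s0_def u_def algebra_simps)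
  then show ?thesis using SRr.renewal_prob2[OF s0_nonneg Tu_nonneg, of "TS * h"] h T_pos by (simp add: g_u_def)
qed

text \<open>\<open>g\<^sub>u(h)\<close> is the function \<open>g_S(u,h)\<close> of the statement (stationarity lets us start at time 0).\<close>
lemma SR_g_eq: "0 \<le> h \<Longrightarrow> SR_g \<mu> u h = g_u h"
proof -
  assume h: "0 \<le> h"
  let ?A = "{y \<in> space SR. 0 < SR_count y (TS * u) \<and> SR_count y (TS * u) < SR_count y (TS * (u + h))}"
  let ?B = "{\<omega>\<in>space SR. renews \<omega> 0 (0 + TS * u) \<and> renews \<omega> (0 + TS * u) (0 + TS * u + TS * h)}"
  have "SR_g \<mu> u h = measure SR ?A" unfolding SR_g_def ..
  also have "\<dots> = measure SR ?B"
  proof (rule measure_eq_AE)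
    show "AE x in SR. (x \<in> ?A) = (x \<in> ?B)"
      using SRr.AE_regular
    proof eventually_elim
      case (elim y)
      have "0 < SR_count y (TS * u) \<longleftrightarrow> SR_count y 0 < SR_count y (TS * u)"
        using SR_count_zero[OF elim] by simp
      then show ?case using SR_count_less_iff[OF elim] by (simp add: algebra_simps)
    qed
  qed measurable
  also have "\<dots> = g_u h" using SRr.renewal_prob2[of 0 "TS * u" "TS * h"] Tu_nonneg h T_pos by (simp add: g_u_def)
  finally show ?thesis .
qed

text \<open>Since \<open>\<nu>_S\<close> has no mass above \<open>T_S\<close>, \<open>\<alpha> = \<nu>_S((T_S u, T_S))\<close>, and it is positive because
  \<open>u < 1\<close> and \<open>\<nu>_S\<close> charges every interval \<open>(c,T_S)\<close>.\<close>
lemma alpha_eq: "alpha = measure nuS {TS * u <..< TS}"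
proof -
  interpret N: prob_space nuS by (rule nu_prob)
  have "TS * u < TS" using u_lt1 T_pos by simp
  then have "{TS * u<..} = {TS * u <..< TS} \<union> {TS..}" by auto
  moreover have "measure nuS ({TS * u <..< TS} \<union> {TS..}) = measure nuS {TS * u <..< TS} + measure nuS {TS..}"
    by (rule N.finite_measure_Union) auto
  moreover have "measure nuS {TS..} = 0" using nu_above_T by (simp add: measure_def)
  ultimately show ?thesis unfolding alpha_def by simp
qed

lemma alpha_pos: "0 < alpha"
proof -
  interpret N: prob_space nuS by (rule nu_prob)
  have "0 < emeasure nuS {TS * u <..< TS}" using u_pos u_lt1 T_pos by (intro nu_gap_pos) auto
  then show ?thesis unfolding alpha_eq by (simp add: N.emeasure_eq_measure)
qed

lemma g_u_bounds: "0 \<le> h \<Longrightarrow> 0 \<le> g_u h \<and> g_u h \<le> 1 - alpha"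
proof -
  assume h: "0 \<le> h"
  have "SRr.prob (Ren0 \<inter> Ren1 h) \<le> SRr.prob Ren0" by (intro SRr.finite_measure_mono) auto
  then show ?thesis using prob_Ren01[OF h] prob_Ren0 measure_nonneg[of SR "Ren0 \<inter> Ren1 h"] by simp
qed

lemma renewed_iff: "\<omega> \<in> space M \<Longrightarrow> renewed i \<omega> \<longleftrightarrow> site i \<omega> \<in> Ren0"
  unfolding Ren0_def renewed_def by (simp add: space_SR)

lemma renewed_after_iff: "renewed_after h i \<omega> \<longleftrightarrow> site i \<omega> \<in> Ren1 h"
  unfolding Ren1_def renewed_after_def by (simp add: space_SR)

lemma prob_not_renewed: "prob {\<omega>\<in>space M. \<not> renewed i \<omega>} = alpha"
proof -
  have "{\<omega>\<in>space M. \<not> renewed i \<omega>} = site i -` (space SR - Ren0) \<inter> space M"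
    using renewed_iff by (auto simp: space_SR)
  then show ?thesis by (simp add: prob_site prob_not_Ren0)
qed

end

section \<open>Decomposition according to the cluster of site 0\<close>

lemma finite_run:
  fixes P :: "int \<Rightarrow> bool"
  assumes P0: "P 0" and right: "\<exists>k::nat. \<not> P (int k)" and left: "\<exists>k::nat. \<not> P (- int k)"
  obtains l r :: nat where "\<not> P (- int l - 1)" "\<not> P (int r + 1)"
    and "\<And>i. - int l \<le> i \<Longrightarrow> i \<le> int r \<Longrightarrow> P i"
proof -
  have ex_r: "\<exists>n. \<not> P (int n + 1)"
  proof -
    obtain k :: nat where k: "\<not> P (int k)" using right by blast
    then obtain n where "k = Suc n" using P0 by (cases k) auto
    then show ?thesis using k by (intro exI[of _ n]) (simp add: add.commute)
  qed
  have ex_l: "\<exists>n. \<not> P (- int n - 1)"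
  proof -
    obtain k :: nat where k: "\<not> P (- int k)" using left by blast
    then obtain n where "k = Suc n" using P0 by (cases k) auto
    then have "- int k = - int n - 1" by simp
    then show ?thesis using k by metis
  qed
  define r where "r = (LEAST n. \<not> P (int n + 1))"
  define l where "l = (LEAST n. \<not> P (- int n - 1))"
  have r_run: "P (int n + 1)" if "n < r" for n
    using not_less_Least[OF that[unfolded r_def]] by simp
  have l_run: "P (- int n - 1)" if "n < l" for n
    using not_less_Least[OF that[unfolded l_def]] by simp
  have "P i" if i: "- int l \<le> i" "i \<le> int r" for i
  proof -
    consider "i = 0" | "0 < i" | "i < 0" by linarith
    then show ?thesis
    proof cases
      case 2
      then have "i = int (nat i - 1) + 1" "nat i - 1 < r" using i by auto
      then show ?thesis using r_run by metis
    next
      case 3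
      then have "i = - int (nat (- i) - 1) - 1" "nat (- i) - 1 < l" using i by auto
      then show ?thesis using l_run by metis
    qed (simp add: P0)
  qed
  moreover have "\<not> P (int r + 1)" unfolding r_def using ex_r by (rule LeastI_ex)
  moreover have "\<not> P (- int l - 1)" unfolding l_def using ex_l by (rule LeastI_ex)
  ultimately show ?thesis using that by blast
qed

context window_pair begin

definition cluster_event :: "real \<Rightarrow> nat \<Rightarrow> nat \<Rightarrow> 'a set" where
  "cluster_event h l r = {\<omega>\<in>space M. \<not> renewed (- int l - 1) \<omega> \<and> \<not> renewed (int r + 1) \<omega>
      \<and> (\<forall>i. - int l \<le> i \<and> i \<le> int r \<longrightarrow> renewed i \<omega> \<and> renewed_after h i \<omega>)}"

lemma cluster_event_sets[measurable]: "cluster_event h l r \<in> sets M"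
proof -
  have "cluster_event h l r = {\<omega>\<in>space M. \<not> renewed (- int l - 1) \<omega> \<and> \<not> renewed (int r + 1) \<omega>
      \<and> (\<forall>i\<in>{- int l .. int r}. renewed i \<omega> \<and> renewed_after h i \<omega>)}"
    unfolding cluster_event_def by auto
  also have "\<dots> \<in> sets M" by measurable
  finally show ?thesis .
qed

lemma prob_cluster_event:
  assumes h: "0 \<le> h"
  shows "prob (cluster_event h l r) = alpha^2 * g_u h ^ (l + r + 1)"
proof -
  define b1 where "b1 = - int l - 1"
  define b2 where "b2 = int r + 1"
  define K where "K = {- int l .. int r}"
  have b: "b1 \<notin> insert b2 K" "b2 \<notin> K" "finite K" unfolding b1_def b2_def K_def by auto
  define A where "A i = (if i = b1 \<or> i = b2 then space SR - Ren0 else Ren0 \<inter> Ren1 h)" for i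
  have A_sets: "A i \<in> sets seq_space" for i unfolding A_def sets_SR[symmetric] by simp
  have A_K: "i \<in> K \<Longrightarrow> A i = Ren0 \<inter> Ren1 h" for i using b unfolding A_def by auto
  have A_b: "A b1 = space SR - Ren0" "A b2 = space SR - Ren0" unfolding A_def by auto
  have mem_K: "site i \<omega> \<in> A i \<longleftrightarrow> renewed i \<omega> \<and> renewed_after h i \<omega>" if "i \<in> K" "\<omega> \<in> space M" for i \<omega>
    using that A_K renewed_iff renewed_after_iff by simp
  have mem_b: "site b \<omega> \<in> A b \<longleftrightarrow> \<not> renewed b \<omega>" if "b = b1 \<or> b = b2" "\<omega> \<in> space M" for b \<omega>
    using that A_b renewed_iff by (auto simp: space_SR)
  have event_eq: "cluster_event h l r = (\<Inter>i\<in>insert b1 (insert b2 K). site i -` A i \<inter> space M)"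
  proof (intro set_eqI)
    fix \<omega>
    have "\<omega> \<in> (\<Inter>i\<in>insert b1 (insert b2 K). site i -` A i \<inter> space M)
        \<longleftrightarrow> \<omega> \<in> space M \<and> site b1 \<omega> \<in> A b1 \<and> site b2 \<omega> \<in> A b2 \<and> (\<forall>i\<in>K. site i \<omega> \<in> A i)"
      by blast
    then show "\<omega> \<in> cluster_event h l r \<longleftrightarrow> \<omega> \<in> (\<Inter>i\<in>insert b1 (insert b2 K). site i -` A i \<inter> space M)"
      using mem_K mem_b unfolding cluster_event_def b1_def[symmetric] b2_def[symmetric] K_def[symmetric]
      by (auto simp: K_def)
  qed
  have "prob (cluster_event h l r) = (\<Prod>i\<in>insert b1 (insert b2 K). prob (site i -` A i \<inter> space M))"
    unfolding event_eq using A_sets b by (intro indep_varsD[OF indep_sites]) auto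
  also have "\<dots> = alpha * (alpha * (\<Prod>i\<in>K. g_u h))"
  proof -
    have "prob (site i -` A i \<inter> space M) = g_u h" if "i \<in> K" for i
      using that A_K prob_site[of "Ren0 \<inter> Ren1 h" i] prob_Ren01[OF h] by simp
    moreover have "prob (site i -` A i \<inter> space M) = alpha" if "i = b1 \<or> i = b2" for i
      using that A_b prob_site[of "space SR - Ren0" i] prob_not_Ren0 by auto
    ultimately show ?thesis using b by simp
  qed
  also have "\<dots> = alpha^2 * g_u h ^ (l + r + 1)"
  proof -
    have "card K = l + r + 1" unfolding K_def by simp
    then show ?thesis by (simp add: power2_eq_square)
  qed
  finally show ?thesis .
qed

text \<open>Almost surely the cluster of 0 is finite in each direction: infinitely many sites
  renewing independently with probability \<open>1 - \<alpha> < 1\<close> is a null event.\<close>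
lemma infinite_run_null:
  assumes f: "inj f"
  shows "{\<omega>\<in>space M. \<forall>k::nat. renewed (f k) \<omega>} \<in> null_sets M"
proof -
  have "prob {\<omega>\<in>space M. \<forall>k. site (f k) \<omega> \<in> Ren0} = 0"
  proof (rule indep_vars_all_in_null[OF indep_sites f])
    show "prob (site i -` Ren0 \<inter> space M) \<le> 1 - alpha" for i
      by (simp add: prob_site prob_Ren0)
  qed (use alpha_pos in \<open>auto simp: sets_SR[symmetric]\<close>)
  moreover have "{\<omega>\<in>space M. \<forall>k. site (f k) \<omega> \<in> Ren0} = {\<omega>\<in>space M. \<forall>k::nat. renewed (f k) \<omega>}"
    using renewed_iff by auto
  ultimately show ?thesis by (auto simp: null_sets_def emeasure_eq_measure)
qed

lemma cluster_event_sub: "cluster_event h l r \<subseteq> {\<omega>\<in>space M. cluster_renewed h \<omega>}"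
proof safe
  fix \<omega> assume e: "\<omega> \<in> cluster_event h l r"
  then show "\<omega> \<in> space M" by (simp add: cluster_event_def)
  show "cluster_renewed h \<omega>" unfolding cluster_renewed_def
  proof (intro allI impI)
    fix i assume c: "in_cluster i \<omega>"
    have "i \<le> int r"
    proof (rule ccontr)
      assume "\<not> i \<le> int r"
      then have "renewed (int r + 1) \<omega>" using c unfolding in_cluster_def by auto
      then show False using e by (simp add: cluster_event_def)
    qed
    moreover have "- int l \<le> i"
    proof (rule ccontr)
      assume "\<not> - int l \<le> i"
      then have "renewed (- int l - 1) \<omega>" using c unfolding in_cluster_def by auto
      then show False using e by (simp add: cluster_event_def)
    qed
    ultimately show "renewed_after h i \<omega>" using e by (simp add: cluster_event_def)
  qed
qed

lemma not_renewed_sub: "{\<omega>\<in>space M. \<not> renewed 0 \<omega>} \<subseteq> {\<omega>\<in>space M. cluster_renewed h \<omega>}"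
  unfolding cluster_renewed_def in_cluster_def by force

lemma cluster_renewed_cover:
  "{\<omega>\<in>space M. cluster_renewed h \<omega>} \<subseteq> {\<omega>\<in>space M. \<not> renewed 0 \<omega>} \<union> (\<Union>l. \<Union>r. cluster_event h l r)
     \<union> ({\<omega>\<in>space M. \<forall>k::nat. renewed (int k) \<omega>} \<union> {\<omega>\<in>space M. \<forall>k::nat. renewed (- int k) \<omega>})"
    (is "_ \<subseteq> ?N0 \<union> ?U \<union> (?R \<union> ?L)")
proof
  fix \<omega> assume "\<omega> \<in> {\<omega>\<in>space M. cluster_renewed h \<omega>}"
  then have sp: "\<omega> \<in> space M" and Q: "cluster_renewed h \<omega>" by auto
  show "\<omega> \<in> ?N0 \<union> ?U \<union> (?R \<union> ?L)"
  proof (cases "renewed 0 \<omega> \<and> (\<exists>k::nat. \<not> renewed (int k) \<omega>) \<and> (\<exists>k::nat. \<not> renewed (- int k) \<omega>)")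
    case True
    then obtain l r :: nat where l: "\<not> renewed (- int l - 1) \<omega>" and r: "\<not> renewed (int r + 1) \<omega>"
      and run: "\<And>i. - int l \<le> i \<Longrightarrow> i \<le> int r \<Longrightarrow> renewed i \<omega>"
      using finite_run[of "\<lambda>i. renewed i \<omega>"] by blast
    have "renewed_after h i \<omega>" if "- int l \<le> i" "i \<le> int r" for i
    proof -
      have "in_cluster i \<omega>" unfolding in_cluster_def using that by (auto intro!: run)
      then show ?thesis using Q unfolding cluster_renewed_def by blast
    qed
    then have "\<omega> \<in> cluster_event h l r" using sp l r run by (simp add: cluster_event_def)
    then show ?thesis by blast
  qed (use sp in blast)
qed

lemma cluster_event_disj_not_renewed: "{\<omega>\<in>space M. \<not> renewed 0 \<omega>} \<inter> cluster_event h l r = {}"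
  unfolding cluster_event_def by force

lemma cluster_event_disj:
  assumes "(l, r) \<noteq> (l', r')"
  shows "cluster_event h l r \<inter> cluster_event h l' r' = {}"
proof -
  have "cluster_event h l r \<inter> cluster_event h l' r' = {}" if "r < r' \<or> l < l'" for l r l' r'
    using that unfolding cluster_event_def by fastforce
  moreover have "r < r' \<or> l < l' \<or> r' < r \<or> l' < l" using assms by (metis linorder_neqE_nat)
  ultimately show ?thesis by blast
qed

text \<open>Summing the double geometric series over the cluster extents \<open>l, r\<close>.\<close>
lemma prob_cluster_union:
  assumes h: "0 \<le> h"
  shows "prob (\<Union>l. \<Union>r. cluster_event h l r) = alpha^2 * g_u h / (1 - g_u h)^2"
proof -
  let ?g = "g_u h"
  define F where "F l = (\<Union>r. cluster_event h l r)" for l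
  have g0: "0 \<le> ?g" and g1: "?g < 1" using g_u_bounds[OF h] alpha_pos by auto
  have F_sets[measurable]: "F l \<in> events" for l unfolding F_def by measurable
  have F_prob: "prob (F l) = alpha^2 * ?g^(l+1) / (1 - ?g)" for l
  proof -
    have "(\<lambda>r. prob (cluster_event h l r)) sums prob (F l)"
      unfolding F_def using cluster_event_disj[of l _ l _ h]
      by (intro measure_UNION) (auto simp: disjoint_family_on_def emeasure_eq_measure)
    moreover have "(\<lambda>r. alpha^2 * ?g^(l+1) * ?g^r) sums (alpha^2 * ?g^(l+1) * (1 / (1 - ?g)))"
      using g0 g1 by (intro sums_mult geometric_sums) simp
    moreover have "(\<lambda>r. prob (cluster_event h l r)) = (\<lambda>r. alpha^2 * ?g^(l+1) * ?g^r)"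
      by (simp add: prob_cluster_event[OF h] power_add mult_ac fun_eq_iff)
    ultimately show ?thesis using sums_unique2 by fastforce
  qed
  have "disjoint_family F" unfolding disjoint_family_on_def F_def
  proof (intro ballI impI)
    fix m n :: nat assume "m \<noteq> n"
    then show "(\<Union>r. cluster_event h m r) \<inter> (\<Union>r. cluster_event h n r) = {}"
      using cluster_event_disj[of m _ n _ h] by blast
  qed
  then have "(\<lambda>l. prob (F l)) sums prob (\<Union>l. F l)"
    by (intro measure_UNION) (auto simp: emeasure_eq_measure)
  moreover have "(\<lambda>l. alpha^2 * ?g / (1 - ?g) * ?g^l) sums (alpha^2 * ?g / (1 - ?g) * (1 / (1 - ?g)))"
    using g0 g1 by (intro sums_mult geometric_sums) simp
  moreover have "(\<lambda>l. prob (F l)) = (\<lambda>l. alpha^2 * ?g / (1 - ?g) * ?g^l)"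
    by (simp add: F_prob fun_eq_iff)
  ultimately show ?thesis unfolding F_def using sums_unique2 by (fastforce simp: power2_eq_square)
qed

lemma prob_cluster_renewed:
  assumes h: "0 \<le> h"
  shows "prob {\<omega>\<in>space M. cluster_renewed h \<omega>} = alpha + alpha^2 * g_u h / (1 - g_u h)^2"
proof -
  let ?N0 = "{\<omega>\<in>space M. \<not> renewed 0 \<omega>}"
  let ?U = "\<Union>l. \<Union>r. cluster_event h l r"
  let ?I = "{\<omega>\<in>space M. \<forall>k::nat. renewed (int k) \<omega>} \<union> {\<omega>\<in>space M. \<forall>k::nat. renewed (- int k) \<omega>}"
  have null: "?I \<in> null_sets M"
    by (intro null_sets.Un infinite_run_null) (auto simp: inj_def)
  have sub: "?N0 \<union> ?U \<subseteq> {\<omega>\<in>space M. cluster_renewed h \<omega>}"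
    using not_renewed_sub[of h] cluster_event_sub[of h] by blast
  have eq_off_null: "(x \<in> A) = (x \<in> B)" if "A \<subseteq> B \<union> I" "B \<subseteq> A" "x \<notin> I" for A B I and x :: 'a
    using that by blast
  have "AE \<omega> in M. (\<omega> \<in> {\<omega>\<in>space M. cluster_renewed h \<omega>}) = (\<omega> \<in> ?N0 \<union> ?U)"
    using AE_not_in[OF null] by eventually_elim (rule eq_off_null[OF cluster_renewed_cover sub])
  then have "prob {\<omega>\<in>space M. cluster_renewed h \<omega>} = prob (?N0 \<union> ?U)"
    by (rule measure_eq_AE) measurable
  also have "\<dots> = prob ?N0 + prob ?U"
    using cluster_event_disj_not_renewed[of h] by (intro finite_measure_Union) auto
  finally show ?thesis by (simp add: prob_not_renewed prob_cluster_union[OF h])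
qed

section \<open>The law of \<open>\<Theta>\<^sub>t\<^sub>0\<^sub>,\<^sub>t\<^sub>1\<close>\<close>

text \<open>A measurable version of \<open>\<Theta>\<close>, set to 0 on the null set of irregular outcomes.\<close>
definition Theta_version :: "'a \<Rightarrow> real" where
  "Theta_version \<omega> = (if all_regular \<omega> then SR_Theta \<mu> Y t0 t1 \<omega> else 0)"

lemma Theta_version_AE: "AE \<omega> in M. SR_Theta \<mu> Y t0 t1 \<omega> = Theta_version \<omega>"
  using AE_all_regular by eventually_elim (simp add: Theta_version_def)

lemma Theta_version_range: "Theta_version \<omega> \<in> {0..1}"
  unfolding Theta_version_def using Theta_range by auto

lemma Theta_version_le_iff: "0 \<le> h \<Longrightarrow> Theta_version \<omega> \<le> h \<longleftrightarrow> (\<not> all_regular \<omega> \<or> cluster_renewed h \<omega>)"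
  unfolding Theta_version_def using Theta_le_iff by auto

lemma Theta_version_meas[measurable]: "Theta_version \<in> borel_measurable M"
proof (rule borel_measurable_iff_le[THEN iffD2], intro allI)
  fix a :: real
  show "{\<omega> \<in> space M. Theta_version \<omega> \<le> a} \<in> sets M"
  proof (cases "0 \<le> a")
    case True
    then have "{\<omega> \<in> space M. Theta_version \<omega> \<le> a} = {\<omega> \<in> space M. \<not> all_regular \<omega> \<or> cluster_renewed a \<omega>}"
      using Theta_version_le_iff by auto
    then show ?thesis by simp
  next
    case False
    then have empty: "{\<omega> \<in> space M. Theta_version \<omega> \<le> a} = {}"
      using Theta_version_range by (auto simp: not_le intro: less_le_trans[of a 0])
    show ?thesis unfolding empty by simp
  qed
qed

lemma Theta_version_cdf:
  assumes h: "0 \<le> h"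
  shows "measure M {\<omega> \<in> space M. Theta_version \<omega> \<le> h} = theta_cdf \<mu> (t1 - t0) h"
proof -
  have "measure M {\<omega> \<in> space M. Theta_version \<omega> \<le> h} = prob {\<omega>\<in>space M. cluster_renewed h \<omega>}"
  proof (rule measure_eq_AE)
    show "AE \<omega> in M. (\<omega> \<in> {\<omega> \<in> space M. Theta_version \<omega> \<le> h}) = (\<omega> \<in> {\<omega>\<in>space M. cluster_renewed h \<omega>})"
      using AE_all_regular by eventually_elim (use Theta_version_le_iff[OF h] in auto)
  qed measurable
  also have "\<dots> = alpha + alpha^2 * g_u h / (1 - g_u h)^2" by (rule prob_cluster_renewed[OF h])
  also have "\<dots> = theta_cdf \<mu> (t1 - t0) h"
    unfolding theta_cdf_def Let_def u_def[symmetric] alpha_eq[symmetric] SR_g_eq[OF h]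
    by (simp add: power_divide)
  finally show ?thesis .
qed

end

theorem mainTheorem7:
  fixes \<mu> :: "real measure" and M :: "'a measure"
    and Y :: "int \<Rightarrow> nat option \<Rightarrow> 'a \<Rightarrow> real" and t0 t1 :: real
  assumes mu_prob: "prob_space \<mu>" and mu_sets: "sets \<mu> = sets borel"
    and mu_pos: "emeasure \<mu> {..0} = 0"
    and mu_bdd: "\<exists>B. emeasure \<mu> {B<..} = 0"
    and M_prob: "prob_space M"
    and indep: "prob_space.indep_vars M (\<lambda>_. borel) (\<lambda>(i, j). Y i j) UNIV"
    and law_first: "\<And>i. distr M borel (Y i None) = SR_nu \<mu>"
    and law_inter: "\<And>i k. distr M borel (Y i (Some k)) = \<mu>"
    and t0: "0 \<le> t0" and t01: "t0 < t1" and t10: "t1 < t0 + 1"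
  shows "\<exists>\<Theta>'. \<Theta>' \<in> borel_measurable M
            \<and> (AE \<omega> in M. SR_Theta \<mu> Y t0 t1 \<omega> = \<Theta>' \<omega>)
            \<and> (AE \<omega> in M. \<Theta>' \<omega> \<in> {0..1})
            \<and> (\<forall>h\<in>{0..1}. measure M {\<omega> \<in> space M. \<Theta>' \<omega> \<le> h} = theta_cdf \<mu> (t1 - t0) h)"
proof -
  interpret window_pair \<mu> M Y t0 t1
    by (intro window_pair.intro site_family.intro interarrival_law.intro site_family_axioms.intro
        window_pair_axioms.intro) (use assms in auto)
  show ?thesis
    using Theta_version_meas Theta_version_AE Theta_version_range Theta_version_cdf
    by (intro exI[of _ Theta_version]) auto
qed

end
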